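(* Let $A \subseteq \mathbb{R}^d$ be a stationary Poisson point process. Then $A$ satisfies the mixed regularity property in expectation: for every $0 \le p \le d$, the total expected measure of the boundary $p$-tiles of the $d$-ball of radius $R$ centered at the origin is $o(R^d)$ as $R \to \infty$.
   Context: For a locally finite $A$, $\mathrm{Del}(A)$ is its Delaunay mosaic and, for a $p$-cell $\gamma \in \mathrm{Del}(A)$, $\gamma^*$ its dual $(d-p)$-dimensional Voronoi cell. $\mathrm{Gr}(p,d)$ is the Grassmannian of linear $p$-planes in $\mathbb{R}^d$, and $\mathbb{R}^d \times \mathrm{Gr}(p,d)$ carries the product of Lebesgue measure and the uniform probability measure on $\mathrm{Gr}(p,d)$. The $p$-tile of $\gamma$ is $J(\gamma,\gamma^* ) = \{(x,L) : x \in \text{the orthogonal projection of } \gamma \text{ onto } L+x, \text{ and } (L+x)\cap\gamma^* \neq \emptyset\}$. For a set $\Omega \subseteq \mathbb{R}^d$, a $p$-tile is a boundary tile of $\Omega$ if its projection to $\mathbb{R}^d$ contains at least one point in $\Omega$ and at least one point outside $\Omega$. *)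

theory Defs
  imports "HOL-Probability.Probability"
begin

definition locally_finite_set :: "'a::euclidean_space set \<Rightarrow> bool" where
  "locally_finite_set A \<longleftrightarrow> (\<forall>B. bounded B \<longrightarrow> finite (A \<inter> B))"

definition stationary_poisson_process ::
  "'w measure \<Rightarrow> ('w \<Rightarrow> 'a::euclidean_space set) \<Rightarrow> real \<Rightarrow> bool" where
  "stationary_poisson_process M X lam \<longleftrightarrow>
     prob_space M \<and> lam > 0 \<and>
     (\<forall>w\<in>space M. locally_finite_set (X w)) \<and>
     (\<forall>B. B \<in> sets borel \<and> bounded B \<longrightarrow>
        (\<lambda>w. card (X w \<inter> B)) \<in> measurable M (count_space UNIV) \<and>
        (\<forall>k::nat. measure M {w \<in> space M. card (X w \<inter> B) = k}
             = (lam * measure lborel B) ^ k / fact k * exp (- (lam * measure lborel B)))) \<and>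
     (\<forall>(I::nat set) B. finite I \<and> disjoint_family_on B I \<and>
        (\<forall>i\<in>I. B i \<in> sets borel \<and> bounded (B i)) \<longrightarrow>
        prob_space.indep_vars M (\<lambda>_. count_space UNIV) (\<lambda>i w. card (X w \<inter> B i)) I)"

definition nearest :: "'a::euclidean_space set \<Rightarrow> 'a \<Rightarrow> 'a set" where
  "nearest A x = {a \<in> A. \<forall>b\<in>A. dist x a \<le> dist x b}"

text \<open>Vertex sets Q of the cells of Del(A): Q is the set of nearest points of A for some x.
  The Delaunay cell is gamma = convex hull Q (Q is exactly its vertex set, since all points of Q
  lie on a common sphere), and its dual Voronoi cell is the set of points having all of Q
  among their nearest points.\<close>
definition delaunay_vertex_sets :: "'a::euclidean_space set \<Rightarrow> 'a set set" where
  "delaunay_vertex_sets A = {Q. Q \<noteq> {} \<and> (\<exists>x. nearest A x = Q)}"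

definition delaunay_cell :: "'a::euclidean_space set \<Rightarrow> 'a set" where
  "delaunay_cell Q = convex hull Q"

definition voronoi_dual :: "'a::euclidean_space set \<Rightarrow> 'a set \<Rightarrow> 'a set" where
  "voronoi_dual A Q = {x. Q \<subseteq> nearest A x}"

definition delaunay_pcells :: "'a::euclidean_space set \<Rightarrow> nat \<Rightarrow> 'a set set" where
  "delaunay_pcells A p = {Q \<in> delaunay_vertex_sets A. aff_dim (delaunay_cell Q) = int p}"

definition grassmannian :: "nat \<Rightarrow> 'a::euclidean_space set set" where
  "grassmannian p = {L. subspace L \<and> dim L = p}"

definition tile :: "nat \<Rightarrow> 'a::euclidean_space set \<Rightarrow> 'a set \<Rightarrow> ('a \<times> 'a set) set" where
  "tile p gam gamstar =
     {(x, L). L \<in> grassmannian p \<and>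
        x \<in> (\<lambda>y. closest_point ((\<lambda>v. x + v) ` L) y) ` gam \<and>
        ((\<lambda>v. x + v) ` L) \<inter> gamstar \<noteq> {}}"

definition ptile :: "'a::euclidean_space set \<Rightarrow> nat \<Rightarrow> 'a set \<Rightarrow> ('a \<times> 'a set) set" where
  "ptile A p Q = tile p (delaunay_cell Q) (voronoi_dual A Q)"

definition boundary_tile :: "'a set \<Rightarrow> ('a \<times> 'b) set \<Rightarrow> bool" where
  "boundary_tile \<Omega> J \<longleftrightarrow> (\<exists>x\<in>fst ` J. x \<in> \<Omega>) \<and> (\<exists>x\<in>fst ` J. x \<notin> \<Omega>)"

definition std_gauss :: "'a::euclidean_space measure" where
  "std_gauss = density lborel
     (\<lambda>x. ennreal ((2 * pi) powr (- real DIM('a) / 2) * exp (- (norm x)\<^sup>2 / 2)))"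

text \<open>Integral with respect to the uniform (rotation invariant) probability measure on Gr(p,d),
  realised as the law of the span of p independent standard Gaussian vectors.\<close>
definition grass_nn_integral :: "nat \<Rightarrow> ('a::euclidean_space set \<Rightarrow> ennreal) \<Rightarrow> ennreal" where
  "grass_nn_integral p f =
     (\<integral>\<^sup>+ v. f (span (v ` {..<p})) \<partial>(PiM {..<p} (\<lambda>_. std_gauss :: 'a measure)))"

text \<open>Measure of a set J of pairs (x,L) under Lebesgue x uniform Grassmannian measure
  (computed by Tonelli: integrate over L the Lebesgue measure of the slice).\<close>
definition tile_measure :: "nat \<Rightarrow> ('a::euclidean_space \<times> 'a set) set \<Rightarrow> ennreal" where
  "tile_measure p J = grass_nn_integral p (\<lambda>L. emeasure lebesgue {x. (x, L) \<in> J})"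

definition boundary_ptile_measure :: "'a::euclidean_space set \<Rightarrow> nat \<Rightarrow> 'a set \<Rightarrow> ennreal" where
  "boundary_ptile_measure A p \<Omega> =
     (\<Sum>\<^sub>\<infinity> Q \<in> {Q \<in> delaunay_pcells A p. boundary_tile \<Omega> (ptile A p Q)}.
        tile_measure p (ptile A p Q))"

end

theory Submission
  imports Defs
begin

text \<open>Each Delaunay cell is anchored at the lattice point k next to one of its vertices and charged
  at the least scale m = n + 1 at which every grid cube of side m near k contains a point of A.
  At that scale every empty ball through a vertex has radius below 2 d m (d = DIM('a)). Hence the
  tiles of a boundary cell have measure O(m^d), the cell lies in the cube of radius 5 d m around k,
  the number of such cells is at most N^(p+1) for the number N of points of A in that cube, and k lies
  in a shell of width O(m) around the sphere of radius R. For a Poisson process the scale n + 1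
  is needed only with probability O(exp (- lam n^d)), while the moments of N grow polynomially in n.
  So the expected charge decays rapidly in n, and summing over the O(R^(d-1) n^d) lattice points
  of each shell bounds the expected total measure by O(R^(d-1)) = o(R^d).\<close>

section \<open>The integer lattice and grid cubes\<close>

definition int_lattice :: "'a::euclidean_space set" where
  "int_lattice = {k. \<forall>b\<in>Basis. k \<bullet> b \<in> \<int>}"

definition lattice_floor :: "'a::euclidean_space \<Rightarrow> 'a" where
  "lattice_floor x = (\<Sum>b\<in>Basis. of_int \<lfloor>x \<bullet> b\<rfloor> *\<^sub>R b)"

definition grid_cube :: "real \<Rightarrow> 'a::euclidean_space \<Rightarrow> 'a set" where
  "grid_cube s j = cbox (s *\<^sub>R j) (s *\<^sub>R j + s *\<^sub>R One)"

definition centered_cube :: "'a::euclidean_space \<Rightarrow> real \<Rightarrow> 'a set" where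
  "centered_cube k c = cbox (k - c *\<^sub>R One) (k + c *\<^sub>R One)"

lemma inner_lattice_floor: "b \<in> Basis \<Longrightarrow> lattice_floor x \<bullet> b = of_int \<lfloor>x \<bullet> b\<rfloor>"
  unfolding lattice_floor_def by simp

lemma lattice_floor_in_int_lattice: "lattice_floor x \<in> int_lattice"
  by (simp add: int_lattice_def inner_lattice_floor)

lemma countable_int_lattice: "countable (int_lattice :: 'a::euclidean_space set)"
proof (rule countable_image_inj_on)
  let ?coords = "\<lambda>k::'a. restrict (\<lambda>b. \<lfloor>k \<bullet> b\<rfloor>) Basis"
  show "countable (?coords ` int_lattice)"
    by (rule countable_subset[of _ "Basis \<rightarrow>\<^sub>E UNIV"]) (auto intro: countable_PiE)
  show "inj_on ?coords int_lattice"
  proof (rule inj_onI)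
    fix k k' :: 'a assume "k \<in> int_lattice" "k' \<in> int_lattice" "?coords k = ?coords k'"
    then have "of_int \<lfloor>k \<bullet> b\<rfloor> = k \<bullet> b" "of_int \<lfloor>k' \<bullet> b\<rfloor> = k' \<bullet> b"
      and "\<lfloor>k \<bullet> b\<rfloor> = \<lfloor>k' \<bullet> b\<rfloor>" if "b \<in> Basis" for b
      using that unfolding int_lattice_def by (auto simp: of_int_floor dest: fun_cong[of _ _ b])
    then show "k = k'" by (metis euclidean_eqI)
  qed
qed

lemma int_lattice_eqI:
  assumes "k \<in> int_lattice" "k' \<in> int_lattice" "\<And>b. b \<in> Basis \<Longrightarrow> \<bar>k \<bullet> b - k' \<bullet> b\<bar> < 1"
  shows "k = k'"
proof (rule euclidean_eqI)
  fix b :: 'a assume "b \<in> Basis"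
  with assms have "k \<bullet> b - k' \<bullet> b \<in> \<int>" "\<bar>k \<bullet> b - k' \<bullet> b\<bar> < 1"
    unfolding int_lattice_def by auto
  then show "k \<bullet> b = k' \<bullet> b" using Ints_nonzero_abs_less1 by fastforce
qed

lemma norm_le_DIM_mult:
  fixes x :: "'a::euclidean_space"
  assumes "\<And>b. b \<in> Basis \<Longrightarrow> \<bar>x \<bullet> b\<bar> \<le> c"
  shows "norm x \<le> real DIM('a) * c"
proof -
  have "norm x \<le> (\<Sum>b\<in>Basis. \<bar>x \<bullet> b\<bar>)" by (rule norm_le_l1)
  also have "\<dots> \<le> (\<Sum>b\<in>(Basis::'a set). c)" by (intro sum_mono assms)
  finally show ?thesis by simp
qed

lemma DIM_ge_1: "real DIM('a::euclidean_space) \<ge> 1"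
  using DIM_positive[where 'a='a] by linarith

lemma norm_diff_lattice_floor_le:
  fixes x :: "'a::euclidean_space"
  shows "norm (x - lattice_floor x) \<le> real DIM('a)"
  using norm_le_DIM_mult[of "x - lattice_floor x" 1]
  by (simp add: inner_diff_left inner_lattice_floor) linarith

lemma mem_grid_cube_lattice_floor:
  fixes x :: "'a::euclidean_space"
  assumes "s > 0"
  shows "x \<in> grid_cube s (lattice_floor (x /\<^sub>R s))"
  unfolding grid_cube_def mem_box
proof safe
  fix b :: 'a assume b: "b \<in> Basis"
  have "s * of_int \<lfloor>x \<bullet> b / s\<rfloor> \<le> x \<bullet> b"
    using assms by (metis mult.commute of_int_floor_le pos_le_divide_eq)
  moreover have "x \<bullet> b / s < of_int \<lfloor>x \<bullet> b / s\<rfloor> + 1" by linarith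
  then have "x \<bullet> b < s * of_int \<lfloor>x \<bullet> b / s\<rfloor> + s"
    using assms by (simp add: pos_divide_less_eq algebra_simps)
  ultimately show "(s *\<^sub>R lattice_floor (x /\<^sub>R s)) \<bullet> b \<le> x \<bullet> b"
    "x \<bullet> b \<le> (s *\<^sub>R lattice_floor (x /\<^sub>R s) + s *\<^sub>R One) \<bullet> b"
    using b by (simp_all add: inner_lattice_floor inner_add_left divide_inverse_commute)
qed

lemma corner_in_grid_cube: "s \<ge> 0 \<Longrightarrow> s *\<^sub>R j \<in> grid_cube s j"
  unfolding grid_cube_def mem_box by (auto simp: inner_add_left)

lemma norm_diff_grid_cube_le:
  fixes x y :: "'a::euclidean_space"
  assumes "x \<in> grid_cube s j" "y \<in> grid_cube s j"
  shows "norm (x - y) \<le> real DIM('a) * s"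
proof (rule norm_le_DIM_mult)
  fix b :: 'a assume "b \<in> Basis"
  with assms have "s * (j \<bullet> b) \<le> x \<bullet> b \<and> x \<bullet> b \<le> s * (j \<bullet> b) + s"
    "s * (j \<bullet> b) \<le> y \<bullet> b \<and> y \<bullet> b \<le> s * (j \<bullet> b) + s"
    by (auto simp: grid_cube_def mem_box inner_add_left)
  then show "\<bar>(x - y) \<bullet> b\<bar> \<le> s" by (simp add: inner_diff_left abs_le_iff)
qed

lemma disjoint_grid_boxes:
  fixes j j' :: "'a::euclidean_space"
  assumes "s > 0" "j \<in> int_lattice" "j' \<in> int_lattice" "j \<noteq> j'"
  shows "box (s *\<^sub>R j) (s *\<^sub>R j + s *\<^sub>R One) \<inter> box (s *\<^sub>R j') (s *\<^sub>R j' + s *\<^sub>R One) = {}"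
proof (rule ccontr)
  assume "\<not> ?thesis"
  then obtain x where x: "x \<in> box (s *\<^sub>R j) (s *\<^sub>R j + s *\<^sub>R One)"
    "x \<in> box (s *\<^sub>R j') (s *\<^sub>R j' + s *\<^sub>R One)"
    by blast
  have "\<bar>j \<bullet> b - j' \<bullet> b\<bar> < 1" if b: "b \<in> Basis" for b
  proof -
    from x b have "s * (j \<bullet> b) < x \<bullet> b" "x \<bullet> b < s * (j \<bullet> b) + s"
      "s * (j' \<bullet> b) < x \<bullet> b" "x \<bullet> b < s * (j' \<bullet> b) + s"
      by (auto simp: mem_box inner_add_left)
    then have "s * (j \<bullet> b) < s * (j' \<bullet> b + 1)" "s * (j' \<bullet> b) < s * (j \<bullet> b + 1)"
      by (simp_all add: algebra_simps)
    then show ?thesis using \<open>s > 0\<close> by (simp add: abs_less_iff)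
  qed
  then have "j = j'" using assms by (intro int_lattice_eqI) auto
  with \<open>j \<noteq> j'\<close> show False ..
qed

text \<open>A volume argument: the grid cubes at the points of S have disjoint interiors.\<close>

lemma card_int_lattice_le_measure:
  fixes S :: "'a::euclidean_space set"
  assumes s: "s > 0" and T: "T \<in> sets lborel" "emeasure lborel T \<le> ennreal V" and "V \<ge> 0"
    and S: "S \<subseteq> int_lattice" "\<And>j. j \<in> S \<Longrightarrow> grid_cube s j \<subseteq> T"
  shows "finite S \<and> real (card S) * s ^ DIM('a) \<le> V"
proof -
  let ?box = "\<lambda>j::'a. box (s *\<^sub>R j) (s *\<^sub>R j + s *\<^sub>R One)"
  have card_le: "real (card F) * s ^ DIM('a) \<le> V" if F: "F \<subseteq> S" "finite F" for F
  proof -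
    have "ennreal (real (card F) * s ^ DIM('a)) = (\<Sum>j\<in>F. emeasure lborel (?box j))"
      using s by (simp add: emeasure_lborel_box_eq inner_add_left ennreal_of_nat_eq_real_of_nat ennreal_mult)
    also have "\<dots> = emeasure lborel (\<Union>j\<in>F. ?box j)"
    proof (rule sum_emeasure)
      show "disjoint_family_on ?box F"
        unfolding disjoint_family_on_def using F S disjoint_grid_boxes[OF s] by blast
    qed (use F in auto)
    also have "\<dots> \<le> emeasure lborel T"
    proof (rule emeasure_mono)
      show "(\<Union>j\<in>F. ?box j) \<subseteq> T"
        using F S box_subset_cbox unfolding grid_cube_def by blast
    qed (use T in simp)
    also have "\<dots> \<le> ennreal V" by (rule T(2))
    finally show ?thesis using \<open>V \<ge> 0\<close> by simp
  qed
  have "finite S \<and> card S \<le> nat \<lfloor>V / s ^ DIM('a)\<rfloor>"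
  proof (rule finite_if_finite_subsets_card_bdd)
    fix F assume "F \<subseteq> S" "finite F"
    from card_le[OF this] s have "real (card F) \<le> V / s ^ DIM('a)"
      by (simp add: pos_le_divide_eq)
    then show "card F \<le> nat \<lfloor>V / s ^ DIM('a)\<rfloor>" by (rule le_nat_floor)
  qed
  then show ?thesis using card_le[of S] by auto
qed

lemma mem_centered_cubeI:
  fixes x k :: "'a::euclidean_space"
  assumes "norm (x - k) \<le> c"
  shows "x \<in> centered_cube k c"
  unfolding centered_cube_def mem_box
proof safe
  fix b :: 'a assume b: "b \<in> Basis"
  then have "\<bar>(x - k) \<bullet> b\<bar> \<le> c" using Basis_le_norm[OF b, of "x - k"] assms by linarith
  with b show "(k - c *\<^sub>R One) \<bullet> b \<le> x \<bullet> b" "x \<bullet> b \<le> (k + c *\<^sub>R One) \<bullet> b"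
    by (auto simp: inner_diff_left inner_add_left abs_le_iff)
qed

lemma emeasure_centered_cube:
  fixes k :: "'a::euclidean_space"
  shows "c \<ge> 0 \<Longrightarrow> emeasure lborel (centered_cube k c) = ennreal ((2 * c) ^ DIM('a))"
  by (simp add: centered_cube_def emeasure_lborel_cbox_eq inner_add_left inner_diff_left)

lemma measure_centered_cube:
  fixes k :: "'a::euclidean_space"
  shows "c \<ge> 0 \<Longrightarrow> measure lborel (centered_cube k c) = (2 * c) ^ DIM('a)"
  by (simp add: measure_def emeasure_centered_cube)

lemma measure_grid_cube:
  fixes j :: "'a::euclidean_space"
  shows "s \<ge> 0 \<Longrightarrow> measure lborel (grid_cube s j) = s ^ DIM('a)"
  by (simp add: grid_cube_def measure_def emeasure_lborel_cbox_eq inner_add_left)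

lemma power_Suc_diff_le:
  fixes u v :: real
  assumes "0 \<le> u" "u \<le> v"
  shows "v ^ Suc e - u ^ Suc e \<le> real (Suc e) * (v - u) * v ^ e"
proof (induction e)
  case (Suc e)
  have "v ^ Suc (Suc e) - u ^ Suc (Suc e) = v * (v ^ Suc e - u ^ Suc e) + u ^ Suc e * (v - u)"
    by (simp add: algebra_simps)
  also have "\<dots> \<le> v * (real (Suc e) * (v - u) * v ^ e) + v ^ Suc e * (v - u)"
    using Suc assms by (intro add_mono mult_left_mono mult_right_mono power_mono) auto
  also have "\<dots> = real (Suc (Suc e)) * (v - u) * v ^ Suc e" by (simp add: algebra_simps)
  finally show ?case .
qed simp

lemma emeasure_cball_diff_ball:
  assumes "0 \<le> u" "u \<le> v"
  shows "emeasure lborel (cball (0::'a::euclidean_space) v - ball 0 u)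
    = ennreal (unit_ball_vol DIM('a) * (v ^ DIM('a) - u ^ DIM('a)))"
proof -
  have "emeasure lborel (cball (0::'a) v - ball 0 u)
      = ennreal (unit_ball_vol DIM('a) * v ^ DIM('a)) - ennreal (unit_ball_vol DIM('a) * u ^ DIM('a))"
    using assms by (subst emeasure_Diff) (auto simp: emeasure_cball emeasure_ball)
  also have "\<dots> = ennreal (unit_ball_vol DIM('a) * (v ^ DIM('a) - u ^ DIM('a)))"
    using assms by (subst ennreal_minus) (auto simp: power_mono algebra_simps)
  finally show ?thesis .
qed

text \<open>Every grid cube of side 1 at a lattice point of the shell lies in the shell thickened by
  DIM('a), whose volume is linear in its thickness and of order R^(DIM('a) - 1).\<close>

lemma card_int_lattice_shell_le:
  fixes R a :: real
  assumes R: "R \<ge> 0" and a: "a \<ge> 0"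
  defines "S \<equiv> {k \<in> (int_lattice :: 'a::euclidean_space set). R - a < norm k \<and> norm k < R + a}"
  shows "finite S \<and> real (card S) \<le> (R + 1) ^ (DIM('a) - 1) * (unit_ball_vol DIM('a) * real DIM('a)
           * (2 * (a + real DIM('a))) * (1 + (a + real DIM('a))) ^ (DIM('a) - 1))"
proof -
  define d where "d = DIM('a)"
  define a' where "a' = a + real d"
  define \<omega> where "\<omega> = unit_ball_vol (real d)"
  define u where "u = max 0 (R - a')"
  define v where "v = R + a'"
  have a'0: "a' \<ge> 0" and \<omega>0: "\<omega> \<ge> 0" using a by (simp_all add: a'_def \<omega>_def)
  have uv: "0 \<le> u" "u \<le> v" "v - u \<le> 2 * a'" unfolding u_def v_def using R a'0 by auto
  have d: "d = Suc (d - 1)" unfolding d_def using DIM_positive[where 'a='a] by simp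
  have "finite S \<and> real (card S) * 1 ^ d \<le> \<omega> * (v ^ d - u ^ d)"
    unfolding d_def
  proof (rule card_int_lattice_le_measure)
    show "emeasure lborel (cball (0::'a) v - ball 0 u) \<le> ennreal (\<omega> * (v ^ DIM('a) - u ^ DIM('a)))"
      using uv by (simp add: emeasure_cball_diff_ball \<omega>_def d_def)
    show "\<omega> * (v ^ DIM('a) - u ^ DIM('a)) \<ge> 0" using uv \<omega>0 by (simp add: power_mono)
    show "S \<subseteq> int_lattice" unfolding S_def by auto
  next
    fix j assume j: "j \<in> S"
    show "grid_cube 1 j \<subseteq> cball 0 v - ball 0 u"
    proof
      fix y assume "y \<in> grid_cube 1 j"
      then have "norm (y - j) \<le> real d"
        using norm_diff_grid_cube_le[of y 1 j "1 *\<^sub>R j"] corner_in_grid_cube[of 1 j] by (simp add: d_def)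
      moreover have "norm y \<le> norm j + norm (y - j)" "norm j \<le> norm y + norm (y - j)"
        using norm_triangle_ineq[of j "y - j"] norm_triangle_ineq[of y "j - y"]
        by (auto simp: norm_minus_commute)
      ultimately show "y \<in> cball 0 v - ball 0 u"
        using j unfolding S_def u_def v_def a'_def by (auto simp: max_def)
    qed
  qed auto
  then have "finite S" and card: "real (card S) \<le> \<omega> * (v ^ d - u ^ d)" by auto
  have "v ^ d - u ^ d \<le> real d * (v - u) * v ^ (d - 1)"
    using power_Suc_diff_le[OF uv(1,2), of "d - 1"] d by simp
  also have "\<dots> \<le> real d * (2 * a') * ((R + 1) * (1 + a')) ^ (d - 1)"
    using uv R a'0 by (intro mult_mono power_mono) (auto simp: v_def algebra_simps)
  finally have "real (card S) \<le> \<omega> * (real d * (2 * a') * ((R + 1) * (1 + a')) ^ (d - 1))"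
    using card \<omega>0 by (meson mult_left_mono order_trans)
  with \<open>finite S\<close> show ?thesis
    unfolding \<omega>_def d_def a'_def by (simp add: power_mult_distrib mult_ac)
qed

section \<open>Poisson distributed counts\<close>

definition poisson_distributed :: "'w measure \<Rightarrow> ('w \<Rightarrow> nat) \<Rightarrow> real \<Rightarrow> bool" where
  "poisson_distributed M N \<mu> \<longleftrightarrow> prob_space M \<and> \<mu> \<ge> 0 \<and> N \<in> measurable M (count_space UNIV) \<and>
     (\<forall>k. measure M {w \<in> space M. N w = k} = \<mu> ^ k / fact k * exp (- \<mu>))"

lemma poisson_distributed_card:
  assumes "stationary_poisson_process M X lam" "B \<in> sets borel" "bounded B"
  shows "poisson_distributed M (\<lambda>w. card (X w \<inter> B)) (lam * measure lborel B)"
  using assms unfolding stationary_poisson_process_def poisson_distributed_def by auto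

lemma nn_integral_poisson_distributed:
  assumes "poisson_distributed M N \<mu>"
  shows "(\<integral>\<^sup>+ w. h (N w) \<partial>M) = (\<Sum>k. h k * ennreal (\<mu> ^ k / fact k * exp (- \<mu>)))"
proof -
  interpret prob_space M using assms unfolding poisson_distributed_def by simp
  have [measurable]: "N \<in> measurable M (count_space UNIV)"
    using assms unfolding poisson_distributed_def by simp
  define level where "level k = {w \<in> space M. N w = k}" for k
  have [measurable]: "level k \<in> sets M" for k unfolding level_def by measurable
  have "(\<integral>\<^sup>+ w. h (N w) \<partial>M) = (\<integral>\<^sup>+ w. (\<Sum>k. h k * indicator (level k) w) \<partial>M)"
  proof (rule nn_integral_cong)
    fix w assume w: "w \<in> space M"
    have "(\<Sum>k. h k * indicator (level k) w) = (\<Sum>k\<in>{N w}. h k * indicator (level k) w)"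
      by (rule suminf_finite) (use w in \<open>auto simp: level_def\<close>)
    then show "h (N w) = (\<Sum>k. h k * indicator (level k) w)" using w by (simp add: level_def)
  qed
  also have "\<dots> = (\<Sum>k. h k * emeasure M (level k))"
    by (simp add: nn_integral_suminf nn_integral_cmult_indicator)
  finally show ?thesis
    using assms by (simp add: emeasure_eq_measure level_def poisson_distributed_def)
qed

lemma emeasure_poisson_distributed_eq_0:
  assumes "poisson_distributed M N \<mu>"
  shows "emeasure M {w \<in> space M. N w = 0} = ennreal (exp (- \<mu>))"
proof -
  interpret prob_space M using assms unfolding poisson_distributed_def by simp
  show ?thesis using assms by (simp add: emeasure_eq_measure poisson_distributed_def)
qed

lemma nn_integral_exp_poisson_distributed:
  assumes "poisson_distributed M N \<mu>"
  shows "(\<integral>\<^sup>+ w. ennreal (exp (t * real (N w))) \<partial>M) = ennreal (exp (\<mu> * (exp t - 1)))"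
proof -
  have \<mu>: "\<mu> \<ge> 0" using assms unfolding poisson_distributed_def by simp
  have exp_sums: "(\<lambda>k. (\<mu> * exp t) ^ k / fact k) sums exp (\<mu> * exp t)"
    using exp_converges[of "\<mu> * exp t"] by (simp add: divide_inverse mult.commute)
  have "(\<integral>\<^sup>+ w. ennreal (exp (t * real (N w))) \<partial>M)
      = (\<Sum>k. ennreal (exp (t * real k)) * ennreal (\<mu> ^ k / fact k * exp (- \<mu>)))"
    by (rule nn_integral_poisson_distributed[OF assms])
  also have "\<dots> = (\<Sum>k. ennreal (exp (- \<mu>) * ((\<mu> * exp t) ^ k / fact k)))"
    using \<mu> by (simp add: ennreal_mult'[symmetric] exp_of_nat_mult[symmetric] power_mult_distrib
        mult_ac)
  also have "\<dots> = ennreal (\<Sum>k. exp (- \<mu>) * ((\<mu> * exp t) ^ k / fact k))"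
    using \<mu> exp_sums by (intro suminf_ennreal2 summable_mult) (auto simp: sums_iff)
  also have "(\<Sum>k. exp (- \<mu>) * ((\<mu> * exp t) ^ k / fact k)) = exp (- \<mu>) * exp (\<mu> * exp t)"
    using exp_sums by (intro sums_unique[symmetric] sums_mult)
  also have "\<dots> = exp (\<mu> * (exp t - 1))"
    by (simp add: exp_add[symmetric] algebra_simps)
  finally show ?thesis .
qed

lemma power_le_fact_mult_exp:
  fixes y :: real
  assumes "y \<ge> 0"
  shows "y ^ n \<le> fact n * exp y"
proof -
  have exp_sums: "(\<lambda>i. y ^ i / fact i) sums exp y"
    using exp_converges[of y] by (simp add: divide_inverse mult.commute)
  have "(\<Sum>i\<in>{n}. y ^ i / fact i) \<le> (\<Sum>i. y ^ i / fact i)"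
    using assms exp_sums by (intro sum_le_suminf) (auto simp: sums_iff)
  then have "y ^ n / fact n \<le> exp y" using exp_sums by (simp add: sums_iff)
  then show ?thesis by (simp add: divide_le_eq mult.commute)
qed

text \<open>Moments through the moment generating function at t = 1 / (\<mu> + 1).\<close>

lemma nn_integral_power_poisson_distributed_le:
  assumes "poisson_distributed M N \<mu>"
  shows "(\<integral>\<^sup>+ w. ennreal (real (N w) ^ n) \<partial>M) \<le> ennreal (fact n * (\<mu> + 1) ^ n * exp 3)"
proof -
  have \<mu>: "\<mu> \<ge> 0" and [measurable]: "N \<in> measurable M (count_space UNIV)"
    using assms unfolding poisson_distributed_def by auto
  define t where "t = 1 / (\<mu> + 1)"
  have t: "t > 0" "t \<le> 1" "\<mu> * t \<le> 1" unfolding t_def using \<mu> by (auto simp: field_simps)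
  have pointwise: "real k ^ n \<le> fact n * (\<mu> + 1) ^ n * exp (t * real k)" for k :: nat
  proof -
    have "real k ^ n = (\<mu> + 1) ^ n * (t * real k) ^ n"
      unfolding t_def using \<mu> by (simp add: power_mult_distrib[symmetric])
    also have "\<dots> \<le> (\<mu> + 1) ^ n * (fact n * exp (t * real k))"
      using t \<mu> by (intro mult_left_mono power_le_fact_mult_exp) auto
    finally show ?thesis by (simp add: mult_ac)
  qed
  have "\<mu> * (exp t - 1) \<le> \<mu> * (t * exp t)"
    by (rule mult_left_mono[OF _ \<mu>]) (use exp_ge_add_one_self[of "- t"] in \<open>simp add: exp_minus field_simps\<close>)
  also have "\<dots> = (\<mu> * t) * exp t" by (simp only: mult.assoc)
  also have "\<dots> \<le> 1 * exp 1" using t \<mu> by (intro mult_mono) auto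
  finally have mgf_le: "exp (\<mu> * (exp t - 1)) \<le> exp 3" using exp_le by simp
  have "(\<integral>\<^sup>+ w. ennreal (real (N w) ^ n) \<partial>M)
      \<le> (\<integral>\<^sup>+ w. ennreal (fact n * (\<mu> + 1) ^ n) * ennreal (exp (t * real (N w))) \<partial>M)"
    using \<mu> by (intro nn_integral_mono) (simp add: ennreal_mult'[symmetric] pointwise)
  also have "\<dots> = ennreal (fact n * (\<mu> + 1) ^ n) * ennreal (exp (\<mu> * (exp t - 1)))"
    by (simp add: nn_integral_cmult nn_integral_exp_poisson_distributed[OF assms])
  also have "\<dots> \<le> ennreal (fact n * (\<mu> + 1) ^ n * exp 3)"
    using \<mu> mgf_le by (simp add: ennreal_mult'[symmetric])
  finally show ?thesis .
qed

section \<open>Polynomially bounded sequences\<close>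

definition poly_bounded :: "(nat \<Rightarrow> real) \<Rightarrow> bool" where
  "poly_bounded f \<longleftrightarrow> (\<exists>C q. \<forall>n. \<bar>f n\<bar> \<le> C * real (Suc n) ^ q)"

lemma poly_bounded_const: "poly_bounded (\<lambda>n. c)"
  unfolding poly_bounded_def by (rule exI[of _ "\<bar>c\<bar>"], rule exI[of _ 0]) simp

lemma poly_bounded_Suc: "poly_bounded (\<lambda>n. real (Suc n))"
  unfolding poly_bounded_def by (rule exI[of _ 1], rule exI[of _ 1]) simp

lemma poly_bounded_mult:
  assumes "poly_bounded f" "poly_bounded g"
  shows "poly_bounded (\<lambda>n. f n * g n)"
proof -
  obtain C1 q1 C2 q2 where f: "\<And>n. \<bar>f n\<bar> \<le> C1 * real (Suc n) ^ q1"
    and g: "\<And>n. \<bar>g n\<bar> \<le> C2 * real (Suc n) ^ q2"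
    using assms unfolding poly_bounded_def by blast
  have "\<bar>f n * g n\<bar> \<le> (C1 * real (Suc n) ^ q1) * (C2 * real (Suc n) ^ q2)" for n
    unfolding abs_mult using f[of n] g[of n] by (intro mult_mono) auto
  then have "\<bar>f n * g n\<bar> \<le> (C1 * C2) * real (Suc n) ^ (q1 + q2)" for n
    by (simp add: power_add mult_ac)
  then show ?thesis unfolding poly_bounded_def by blast
qed

lemma poly_bounded_add:
  assumes "poly_bounded f" "poly_bounded g"
  shows "poly_bounded (\<lambda>n. f n + g n)"
proof -
  obtain C1 q1 C2 q2 where f: "\<And>n. \<bar>f n\<bar> \<le> C1 * real (Suc n) ^ q1"
    and g: "\<And>n. \<bar>g n\<bar> \<le> C2 * real (Suc n) ^ q2"
    using assms unfolding poly_bounded_def by blast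
  have C: "C1 \<ge> 0" "C2 \<ge> 0" using f[of 0] g[of 0] by (auto intro: order_trans[OF abs_ge_zero])
  have "\<bar>f n + g n\<bar> \<le> (C1 + C2) * real (Suc n) ^ (q1 + q2)" for n
  proof -
    have "real (Suc n) ^ q1 \<le> real (Suc n) ^ (q1 + q2)" "real (Suc n) ^ q2 \<le> real (Suc n) ^ (q1 + q2)"
      by (auto intro: power_increasing)
    with f[of n] g[of n] C mult_left_mono show ?thesis
      by (smt (verit, best) distrib_right)
  qed
  then show ?thesis unfolding poly_bounded_def by blast
qed

lemma poly_bounded_power: "poly_bounded f \<Longrightarrow> poly_bounded (\<lambda>n. f n ^ k)"
  by (induction k) (simp_all add: poly_bounded_const poly_bounded_mult)

lemma summable_poly_bounded_mult_exp:
  assumes "poly_bounded P" "c > 0"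
  shows "summable (\<lambda>n. P n * exp (- c * real n))"
proof -
  obtain C q where P: "\<And>n. \<bar>P n\<bar> \<le> C * real (Suc n) ^ q"
    using assms(1) unfolding poly_bounded_def by blast
  have C: "C \<ge> 0" using P[of 0] by (auto intro: order_trans[OF abs_ge_zero])
  define K where "K = C * (2 / c) ^ q * fact q * exp (c / 2)"
  show ?thesis
  proof (rule summable_comparison_test')
    show "summable (\<lambda>n. K * exp (- c / 2) ^ n)"
      using assms(2) by (intro summable_mult summable_geometric) simp
  next
    fix n
    have "real (Suc n) = (2 / c) * (c * real (Suc n) / 2)" using assms(2) by simp
    then have "real (Suc n) ^ q = (2 / c) ^ q * (c * real (Suc n) / 2) ^ q"
      by (metis power_mult_distrib)
    also have "\<dots> \<le> (2 / c) ^ q * (fact q * exp (c * real (Suc n) / 2))"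
      using assms(2) by (intro mult_left_mono power_le_fact_mult_exp) auto
    finally have "\<bar>P n\<bar> * exp (- c * real n)
        \<le> C * ((2 / c) ^ q * (fact q * exp (c * real (Suc n) / 2))) * exp (- c * real n)"
      using P[of n] C by (intro mult_right_mono order_trans[OF P mult_left_mono]) auto
    also have "\<dots> = C * (2 / c) ^ q * fact q * (exp (c * real (Suc n) / 2) * exp (- c * real n))"
      by (simp add: mult_ac)
    also have "exp (c * real (Suc n) / 2) * exp (- c * real n) = exp (c / 2 + real n * (- c / 2))"
      by (simp add: mult_exp_exp field_simps)
    also have "\<dots> = exp (c / 2) * exp (- c / 2) ^ n"
      by (simp only: exp_add exp_of_nat_mult)
    also have "C * (2 / c) ^ q * fact q * (exp (c / 2) * exp (- c / 2) ^ n) = K * exp (- c / 2) ^ n"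
      unfolding K_def by (simp add: mult_ac)
    finally show "norm (P n * exp (- c * real n)) \<le> K * exp (- c / 2) ^ n"
      by (simp add: abs_mult)
  qed
qed

lemma summable_poly_bounded_mult_exp_power:
  assumes "poly_bounded P" "lam > 0" "d > 0"
  shows "summable (\<lambda>n. P n * exp (- (lam * real n ^ d) / 2))"
proof (rule summable_comparison_test')
  show "summable (\<lambda>n. \<bar>P n\<bar> * exp (- (lam / 2) * real n))"
    using assms(1,2) by (intro summable_poly_bounded_mult_exp) (auto simp: poly_bounded_def)
next
  fix n
  have "real n \<le> real n ^ d"
    using assms(3) by (cases n) (auto intro: self_le_power)
  then have "exp (- (lam * real n ^ d) / 2) \<le> exp (- (lam / 2) * real n)"
    using assms(2) by (simp add: field_simps)
  then show "norm (P n * exp (- (lam * real n ^ d) / 2)) \<le> \<bar>P n\<bar> * exp (- (lam / 2) * real n)"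
    by (simp add: abs_mult mult_left_mono)
qed

section \<open>Delaunay cells and their tiles\<close>

lemma dist_nearest_eq: "q \<in> nearest A z \<Longrightarrow> q' \<in> nearest A z \<Longrightarrow> dist z q' = dist z q"
  unfolding nearest_def by (auto intro: antisym)

lemma ball_nearest_disjoint: "q \<in> nearest A z \<Longrightarrow> ball z (dist z q) \<inter> A = {}"
  unfolding nearest_def by (auto simp: dist_commute not_less)

text \<open>Projection onto the affine plane through a point z of the dual Voronoi cell is
  non-expansive and fixes z, and the Delaunay cell lies in the empty sphere around z.\<close>

lemma tile_point_near_dual_center:
  fixes A Q :: "'a::euclidean_space set"
  assumes "(x, L) \<in> tile p (convex hull Q) (voronoi_dual A Q)" and q: "q \<in> Q"
  shows "\<exists>z. Q \<subseteq> nearest A z \<and> dist x z \<le> dist z q"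
proof -
  define S where "S = (+) x ` L"
  from assms have "L \<in> grassmannian p" "x \<in> closest_point S ` (convex hull Q)"
    "S \<inter> voronoi_dual A Q \<noteq> {}"
    unfolding tile_def S_def by auto
  then obtain y z where L: "subspace L" and y: "y \<in> convex hull Q" "x = closest_point S y"
    and z: "z \<in> S" "Q \<subseteq> nearest A z"
    unfolding grassmannian_def voronoi_dual_def by blast
  have "convex S" unfolding S_def using L by (intro convex_translation subspace_imp_convex)
  moreover have "closed S" unfolding S_def using L by (intro closed_translation closed_subspace)
  moreover have "S \<noteq> {}" using z(1) by auto
  ultimately have "dist x z \<le> dist y z"
    using closest_point_lipschitz[of S y z] closest_point_self[OF z(1)] y(2) by simp
  moreover have "Q \<subseteq> cball z (dist z q)"
  proof
    fix q' assume "q' \<in> Q"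
    then have "dist z q' = dist z q" using z(2) q by (intro dist_nearest_eq) auto
    then show "q' \<in> cball z (dist z q)" by simp
  qed
  then have "convex hull Q \<subseteq> cball z (dist z q)" by (intro hull_minimal) auto
  with y have "dist y z \<le> dist z q" by (auto simp: dist_commute)
  ultimately show ?thesis using z(2) by auto
qed

lemma std_gauss_density_eq_prod:
  fixes x :: "'a::euclidean_space"
  shows "(2 * pi) powr (- real DIM('a) / 2) * exp (- (norm x)\<^sup>2 / 2)
       = (\<Prod>b\<in>Basis. std_normal_density (x \<bullet> b))"
proof -
  have "(2 * pi) powr (- real DIM('a) / 2) = ((2 * pi) powr (- 1 / 2)) powr real DIM('a)"
    by (simp add: powr_powr)
  also have "\<dots> = (1 / sqrt (2 * pi)) ^ DIM('a)"
    by (simp add: powr_realpow powr_minus_divide powr_half_sqrt)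
  moreover have "- (norm x)\<^sup>2 / 2 = (\<Sum>b\<in>(Basis::'a set). - (x \<bullet> b)\<^sup>2 / 2)"
    unfolding power2_norm_eq_inner
    by (subst euclidean_inner) (simp add: power2_eq_square sum_divide_distrib sum_negf)
  moreover have "(\<Prod>b\<in>Basis. std_normal_density (x \<bullet> b))
      = (1 / sqrt (2 * pi)) ^ DIM('a) * exp (\<Sum>b\<in>(Basis::'a set). - (x \<bullet> b)\<^sup>2 / 2)"
    unfolding std_normal_density_def by (simp only: prod.distrib prod_constant) (simp add: exp_sum)
  ultimately show ?thesis by simp
qed

lemma prob_space_std_gauss: "prob_space (std_gauss :: 'a::euclidean_space measure)"
proof
  let ?g = "\<lambda>x::'a. ennreal ((2 * pi) powr (- real DIM('a) / 2) * exp (- (norm x)\<^sup>2 / 2))"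
  have "emeasure (std_gauss :: 'a measure) (space std_gauss) = (\<integral>\<^sup>+ x. ?g x \<partial>lborel)"
    unfolding std_gauss_def by (subst emeasure_density) auto
  also have "\<dots> = (\<integral>\<^sup>+ x. (\<Prod>b\<in>(Basis::'a set). ennreal (std_normal_density (x \<bullet> b))) \<partial>lborel)"
    by (intro nn_integral_cong, unfold std_gauss_density_eq_prod) (simp add: prod_ennreal)
  also have "\<dots> = (\<Prod>b\<in>(Basis::'a set). (\<integral>\<^sup>+ t. ennreal (std_normal_density t) \<partial>lborel))"
    by (rule nn_integral_lborel_prod) auto
  also have "\<dots> = 1"
    by (simp add: nn_integral_eq_integral)
  finally show "emeasure (std_gauss :: 'a measure) (space std_gauss) = 1" .
qed

lemma grass_nn_integral_le_const:
  assumes "\<And>L. f L \<le> c"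
  shows "grass_nn_integral p f \<le> c"
proof -
  interpret prob_space "PiM {..<p} (\<lambda>_. std_gauss :: 'a::euclidean_space measure)"
    by (intro prob_space_PiM prob_space_std_gauss)
  have "grass_nn_integral p f \<le> (\<integral>\<^sup>+ v. c \<partial>(PiM {..<p} (\<lambda>_. std_gauss :: 'a measure)))"
    unfolding grass_nn_integral_def by (intro nn_integral_mono assms)
  also have "\<dots> = c" by (simp add: emeasure_space_1)
  finally show ?thesis .
qed

lemma tile_measure_le_cube:
  fixes J :: "('a::euclidean_space \<times> 'a set) set"
  assumes "\<And>x L. (x, L) \<in> J \<Longrightarrow> dist x q < c" "c \<ge> 0"
  shows "tile_measure p J \<le> ennreal ((2 * c) ^ DIM('a))"
  unfolding tile_measure_def
proof (rule grass_nn_integral_le_const)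
  fix L
  have "{x. (x, L) \<in> J} \<subseteq> centered_cube q c"
  proof
    fix x assume "x \<in> {x. (x, L) \<in> J}"
    then have "norm (x - q) \<le> c" using assms(1)[of x L] by (simp add: dist_norm)
    then show "x \<in> centered_cube q c" by (rule mem_centered_cubeI)
  qed
  then have "emeasure lebesgue {x. (x, L) \<in> J} \<le> emeasure lebesgue (centered_cube q c)"
    by (intro emeasure_mono) (auto simp: centered_cube_def)
  also have "\<dots> = ennreal ((2 * c) ^ DIM('a))"
    using emeasure_centered_cube[OF assms(2), of q] by (simp add: centered_cube_def)
  finally show "emeasure lebesgue {x. (x, L) \<in> J} \<le> ennreal ((2 * c) ^ DIM('a))" .
qed

lemma boundary_tile_ball_norm_bounds:
  fixes J :: "('a::euclidean_space \<times> 'b) set"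
  assumes "boundary_tile (ball 0 R) J" "\<And>x L. (x, L) \<in> J \<Longrightarrow> dist x q < c"
    and "norm (q - k) \<le> e"
  shows "R - c - e < norm k \<and> norm k < R + c + e"
proof -
  from assms(1) obtain x1 L1 x2 L2 where "(x1, L1) \<in> J" "norm x1 < R" "(x2, L2) \<in> J" "norm x2 \<ge> R"
    unfolding boundary_tile_def by force
  then have "dist x1 q < c" "dist x2 q < c" using assms(2) by auto
  moreover have "norm q \<le> norm x1 + dist x1 q" "norm x2 \<le> norm q + dist x2 q"
    using norm_triangle_ineq[of x1 "q - x1"] norm_triangle_ineq[of q "x2 - q"]
    by (auto simp: dist_norm norm_minus_commute)
  moreover have "norm k \<le> norm q + norm (q - k)" "norm q \<le> norm k + norm (q - k)"
    using norm_triangle_ineq[of q "k - q"] norm_triangle_ineq[of k "q - k"]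
    by (auto simp: norm_minus_commute)
  ultimately show ?thesis using \<open>norm x1 < R\<close> \<open>norm x2 \<ge> R\<close> assms(3) by linarith
qed

lemma delaunay_pcell_affine_basis:
  assumes "Q \<in> delaunay_pcells A p"
  obtains S where "S \<subseteq> Q" "card S = Suc p" "affine hull S = affine hull Q"
proof -
  obtain S where S: "S \<subseteq> Q" "\<not> affine_dependent S" "affine hull Q = affine hull S"
    using affine_basis_exists[of Q] by blast
  have "int (card S) = aff_dim S + 1" using aff_dim_affine_independent[OF S(2)] by simp
  also have "aff_dim S = aff_dim Q" by (metis S(3) aff_dim_affine_hull)
  also have "\<dots> = int p"
    using assms unfolding delaunay_pcells_def delaunay_cell_def by (simp add: aff_dim_convex_hull)
  finally show ?thesis using that S by simp
qed

text \<open>Both centres are equidistant from the points of S, so the points of S lie on the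
  bisecting hyperplane of the two centres; so then does Q, which makes every point of Q as
  close to the second centre as the points of S are.\<close>

lemma delaunay_vertex_set_subsetI:
  fixes A :: "'a::euclidean_space set"
  assumes "Q \<in> delaunay_vertex_sets A" "Q' \<in> delaunay_vertex_sets A"
    and S: "S \<subseteq> Q" "S \<subseteq> Q'" "affine hull S = affine hull Q"
  shows "Q \<subseteq> Q'"
proof
  fix q assume q: "q \<in> Q"
  obtain x x' where x: "nearest A x = Q" and x': "nearest A x' = Q'"
    using assms(1,2) unfolding delaunay_vertex_sets_def by auto
  obtain s0 where s0: "s0 \<in> S" using q S(3) by fastforce
  define \<beta> where "\<beta> = ((dist x s0)\<^sup>2 - (dist x' s0)\<^sup>2 - (norm x)\<^sup>2 + (norm x')\<^sup>2) / 2"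
  have bisector: "inner (x' - x) y = \<beta> \<longleftrightarrow> dist x' y = dist x' s0" if "dist x y = dist x s0" for y
  proof -
    have "(dist x y)\<^sup>2 - (dist x' y)\<^sup>2 = 2 * inner (x' - x) y + (norm x)\<^sup>2 - (norm x')\<^sup>2"
      by (simp add: dist_norm power2_norm_eq_inner inner_diff_left inner_diff_right inner_commute
          algebra_simps)
    then have "(dist x s0)\<^sup>2 - (dist x' y)\<^sup>2 = 2 * inner (x' - x) y + (norm x)\<^sup>2 - (norm x')\<^sup>2"
      using that by simp
    then have "inner (x' - x) y = \<beta> \<longleftrightarrow> (dist x' y)\<^sup>2 = (dist x' s0)\<^sup>2"
      unfolding \<beta>_def by (auto simp: field_simps)
    then show ?thesis by (simp add: power2_eq_iff_nonneg)
  qed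
  have "S \<subseteq> {y. inner (x' - x) y = \<beta>}"
  proof
    fix s assume "s \<in> S"
    then have "dist x s = dist x s0" "dist x' s = dist x' s0"
      using S s0 x x' dist_nearest_eq[of _ A] by (metis subsetD)+
    then show "s \<in> {y. inner (x' - x) y = \<beta>}" using bisector by simp
  qed
  then have "affine hull Q \<subseteq> {y. inner (x' - x) y = \<beta>}"
    using S(3) by (metis affine_hyperplane hull_minimal)
  then have "inner (x' - x) q = \<beta>" using q hull_subset[of Q affine] by auto
  moreover have "dist x q = dist x s0" using q s0 S x dist_nearest_eq[of _ A x] by blast
  ultimately have "dist x' q = dist x' s0" using bisector by blast
  moreover have "s0 \<in> nearest A x'" "q \<in> A" using s0 S x' q x unfolding nearest_def by auto
  ultimately show "q \<in> Q'" using x' unfolding nearest_def by auto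
qed

text \<open>A p-cell is determined by any p + 1 of its vertices that span its affine hull.\<close>

lemma card_delaunay_pcells_le:
  fixes A :: "'a::euclidean_space set"
  assumes B: "finite B" and F: "F \<subseteq> {Q \<in> delaunay_pcells A p. Q \<subseteq> B}"
  shows "finite F \<and> card F \<le> card B ^ Suc p"
proof -
  define basis where
    "basis Q = (SOME S. S \<subseteq> Q \<and> card S = Suc p \<and> affine hull S = affine hull Q)" for Q :: "'a set"
  have basis: "basis Q \<subseteq> Q \<and> card (basis Q) = Suc p \<and> affine hull (basis Q) = affine hull Q"
    if "Q \<in> F" for Q
  proof -
    have "Q \<in> delaunay_pcells A p" using that F by auto
    then obtain S where "S \<subseteq> Q" "card S = Suc p" "affine hull S = affine hull Q"
      by (rule delaunay_pcell_affine_basis)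
    then have "\<exists>S. S \<subseteq> Q \<and> card S = Suc p \<and> affine hull S = affine hull Q" by blast
    then show ?thesis unfolding basis_def by (rule someI_ex)
  qed
  have vertex_sets: "F \<subseteq> delaunay_vertex_sets A" using F unfolding delaunay_pcells_def by auto
  have "inj_on basis F"
  proof (rule inj_onI)
    fix Q Q' assume Q: "Q \<in> F" "Q' \<in> F" and eq: "basis Q = basis Q'"
    have "Q \<subseteq> Q'"
      using basis[OF Q(1)] basis[OF Q(2)] eq vertex_sets Q
      by (intro delaunay_vertex_set_subsetI[of Q A Q' "basis Q"]) auto
    moreover have "Q' \<subseteq> Q"
      using basis[OF Q(1)] basis[OF Q(2)] eq vertex_sets Q
      by (intro delaunay_vertex_set_subsetI[of Q' A Q "basis Q'"]) auto
    ultimately show "Q = Q'" ..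
  qed
  moreover have "basis ` F \<subseteq> {S. S \<subseteq> B \<and> card S = Suc p}" using basis F by blast
  ultimately have "card F \<le> card {S. S \<subseteq> B \<and> card S = Suc p}"
    using B by (intro card_inj_on_le) auto
  also have "\<dots> = card B choose Suc p" using B by (rule n_subsets)
  also have "\<dots> \<le> card B ^ Suc p"
    by (cases "Suc p \<le> card B") (auto intro: binomial_le_pow simp: binomial_eq_0 simp del: power_Suc)
  moreover have "F \<subseteq> Pow B" using F by auto
  then have "finite F" using B by (rule finite_subset[OF _ finite_Pow_iff[THEN iffD2]])
  ultimately show ?thesis by simp
qed

section \<open>Scales at which a point set is occupied\<close>

definition near_grid_points :: "'a::euclidean_space \<Rightarrow> real \<Rightarrow> 'a set" where
  "near_grid_points k m = {j \<in> int_lattice. norm (m *\<^sub>R j - k) \<le> 4 * real DIM('a) * m}"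

definition occupied_at_scale :: "'a::euclidean_space set \<Rightarrow> 'a \<Rightarrow> real \<Rightarrow> bool" where
  "occupied_at_scale A k m \<longleftrightarrow> (\<forall>j\<in>near_grid_points k m. A \<inter> grid_cube m j \<noteq> {})"

lemma card_near_grid_points_le:
  fixes k :: "'a::euclidean_space"
  assumes m: "m > 0"
  shows "finite (near_grid_points k m) \<and> real (card (near_grid_points k m)) \<le> (10 * real DIM('a)) ^ DIM('a)"
proof -
  define D where "D = real DIM('a)"
  have "D \<ge> 1" unfolding D_def by (rule DIM_ge_1)
  have "finite (near_grid_points k m) \<and>
      real (card (near_grid_points k m)) * m ^ DIM('a) \<le> (2 * (5 * D * m)) ^ DIM('a)"
  proof (rule card_int_lattice_le_measure)
    show "emeasure lborel (centered_cube k (5 * D * m)) \<le> ennreal ((2 * (5 * D * m)) ^ DIM('a))"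
      using m \<open>D \<ge> 1\<close> by (simp add: emeasure_centered_cube)
  next
    fix j assume j: "j \<in> near_grid_points k m"
    show "grid_cube m j \<subseteq> centered_cube k (5 * D * m)"
    proof
      fix y assume "y \<in> grid_cube m j"
      then have "norm (y - m *\<^sub>R j) \<le> D * m"
        using norm_diff_grid_cube_le[of y m j "m *\<^sub>R j"] corner_in_grid_cube[of m j] m
        unfolding D_def by simp
      moreover have "norm (m *\<^sub>R j - k) \<le> 4 * D * m" using j unfolding near_grid_points_def D_def by auto
      ultimately have "norm (y - k) \<le> 5 * D * m"
        using norm_triangle_ineq[of "y - m *\<^sub>R j" "m *\<^sub>R j - k"] by simp
      then show "y \<in> centered_cube k (5 * D * m)" by (rule mem_centered_cubeI)
    qed
  qed (use m \<open>D \<ge> 1\<close> in \<open>simp_all add: near_grid_points_def centered_cube_def subset_iff\<close>)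
  moreover have "2 * (5 * D * m) = (10 * D) * m" by simp
  then have "(2 * (5 * D * m)) ^ DIM('a) = (10 * D) ^ DIM('a) * m ^ DIM('a)"
    by (simp only: power_mult_distrib)
  moreover have "m ^ DIM('a) > 0" using m by simp
  ultimately show ?thesis unfolding D_def using mult_le_cancel_right_pos by auto
qed

lemma shrink_ball_towards:
  fixes a z :: "'a::real_normed_vector"
  assumes "0 < \<rho>" "\<rho> \<le> r" "dist a z \<le> r"
  obtains z' where "dist a z' \<le> \<rho>" "ball z' \<rho> \<subseteq> ball z r"
proof
  define z' where "z' = a + (\<rho> / r) *\<^sub>R (z - a)"
  have r: "r > 0" using assms by simp
  have "dist a z' = (\<rho> / r) * dist a z"
    unfolding z'_def using assms r by (simp add: dist_norm norm_minus_commute)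
  also have "\<dots> \<le> (\<rho> / r) * r" using assms r by (intro mult_left_mono) auto
  finally show "dist a z' \<le> \<rho>" using r by simp
  have "z - z' = (1 - \<rho> / r) *\<^sub>R (z - a)" unfolding z'_def by (simp add: algebra_simps)
  then have "dist z z' = (1 - \<rho> / r) * dist a z" using assms r by (simp add: dist_norm norm_minus_commute)
  also have "\<dots> \<le> (1 - \<rho> / r) * r" using assms r by (intro mult_left_mono) auto
  finally have "dist z z' \<le> r - \<rho>" using r by (simp add: algebra_simps)
  show "ball z' \<rho> \<subseteq> ball z r"
  proof
    fix y assume "y \<in> ball z' \<rho>"
    with \<open>dist z z' \<le> r - \<rho>\<close> dist_triangle[of z y z'] show "y \<in> ball z r"
      unfolding mem_ball by linarith
  qed
qed

text \<open>An empty ball of radius r \<ge> 2 DIM('a) m with a point of its sphere near k could be shrunk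
  to an empty ball of radius 2 DIM('a) m containing a whole grid cube of side m near k.\<close>

lemma empty_ball_radius_lt:
  fixes A :: "'a::euclidean_space set"
  assumes m: "m \<ge> 1" and occupied: "occupied_at_scale A k m" and empty: "ball z r \<inter> A = {}"
    and az: "dist a z \<le> r" and ak: "norm (a - k) \<le> real DIM('a)"
  shows "r < 2 * real DIM('a) * m"
proof (rule ccontr)
  define D where "D = real DIM('a)"
  have "D \<ge> 1" unfolding D_def by (rule DIM_ge_1)
  assume "\<not> r < 2 * real DIM('a) * m"
  then have "0 < 2 * D * m" "2 * D * m \<le> r" using m \<open>D \<ge> 1\<close> unfolding D_def by auto
  then obtain z' where z'a: "dist a z' \<le> 2 * D * m" and z': "ball z' (2 * D * m) \<subseteq> ball z r"
    using az by (rule shrink_ball_towards)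
  define j where "j = lattice_floor (z' /\<^sub>R m)"
  have z'_cube: "z' \<in> grid_cube m j" unfolding j_def using m by (intro mem_grid_cube_lattice_floor) auto
  have "grid_cube m j \<subseteq> ball z' (2 * D * m)"
  proof
    fix y assume "y \<in> grid_cube m j"
    then have "dist z' y \<le> D * m"
      using norm_diff_grid_cube_le[OF _ z'_cube] unfolding D_def by (simp add: dist_norm norm_minus_commute)
    also have "\<dots> < 2 * D * m" using m \<open>D \<ge> 1\<close> by simp
    finally show "y \<in> ball z' (2 * D * m)" by simp
  qed
  with z' empty have "A \<inter> grid_cube m j = {}" by blast
  moreover have "j \<in> near_grid_points k m"
  proof -
    have "norm (m *\<^sub>R j - z') \<le> D * m"
      using norm_diff_grid_cube_le[OF corner_in_grid_cube z'_cube] m unfolding D_def by simp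
    moreover have "norm (m *\<^sub>R j - k) \<le> norm (m *\<^sub>R j - z') + dist a z' + norm (a - k)"
      using norm_triangle_ineq[of "m *\<^sub>R j - z'" "z' - a"] norm_triangle_ineq[of "m *\<^sub>R j - a" "a - k"]
      by (simp add: dist_norm norm_minus_commute algebra_simps)
    moreover have "D \<le> D * m" using \<open>D \<ge> 1\<close> m by simp
    ultimately have "norm (m *\<^sub>R j - k) \<le> 4 * D * m" using z'a ak unfolding D_def by linarith
    then show ?thesis unfolding near_grid_points_def D_def j_def using lattice_floor_in_int_lattice by auto
  qed
  ultimately show False using occupied unfolding occupied_at_scale_def by blast
qed

lemma ptile_near_vertex:
  fixes A :: "'a::euclidean_space set"
  assumes "q \<in> Q" "norm (q - k) \<le> real DIM('a)" "m \<ge> 1" "occupied_at_scale A k m"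
    and "(x, L) \<in> ptile A p Q"
  shows "dist x q < 4 * real DIM('a) * m"
proof -
  obtain z where z: "Q \<subseteq> nearest A z" "dist x z \<le> dist z q"
    using tile_point_near_dual_center assms(1,5) unfolding ptile_def delaunay_cell_def by blast
  have "ball z (dist z q) \<inter> A = {}" using z(1) assms(1) by (intro ball_nearest_disjoint) auto
  then have "dist z q < 2 * real DIM('a) * m"
    using empty_ball_radius_lt[OF assms(3,4) _ _ assms(2)] by (simp add: dist_commute)
  then show ?thesis using z(2) dist_triangle[of x q z] by linarith
qed

lemma delaunay_vertices_subset_centered_cube:
  fixes A :: "'a::euclidean_space set"
  assumes "Q \<in> delaunay_vertex_sets A" "q0 \<in> Q" "norm (q0 - k) \<le> real DIM('a)"
    and m: "m \<ge> 1" and "occupied_at_scale A k m"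
  shows "Q \<subseteq> centered_cube k (5 * real DIM('a) * m)"
proof
  fix q assume "q \<in> Q"
  obtain z where z: "nearest A z = Q" using assms(1) unfolding delaunay_vertex_sets_def by auto
  have "ball z (dist z q0) \<inter> A = {}" using z assms(2) by (intro ball_nearest_disjoint) auto
  then have "dist z q0 < 2 * real DIM('a) * m"
    using empty_ball_radius_lt[OF m assms(5) _ _ assms(3)] by (simp add: dist_commute)
  moreover have "dist q z = dist z q0"
    using z \<open>q \<in> Q\<close> assms(2) dist_nearest_eq[of q0 A z q] by (simp add: dist_commute)
  moreover have "norm (q - k) \<le> dist q z + dist z q0 + norm (q0 - k)"
    using norm_triangle_ineq[of "q - q0" "q0 - k"] dist_triangle[of q q0 z] by (simp add: dist_norm)
  moreover have "real DIM('a) \<le> real DIM('a) * m" using m DIM_ge_1[where 'a='a] by simp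
  ultimately have "norm (q - k) \<le> 5 * real DIM('a) * m"
    using assms(3) by linarith
  then show "q \<in> centered_cube k (5 * real DIM('a) * m)" by (rule mem_centered_cubeI)
qed

section \<open>Occupied scales of a Poisson process\<close>

lemma
  assumes "stationary_poisson_process M X lam"
  shows poisson_process_prob_space: "prob_space M"
    and poisson_process_intensity_pos: "lam > 0"
    and poisson_process_locally_finite: "w \<in> space M \<Longrightarrow> locally_finite_set (X w)"
  using assms unfolding stationary_poisson_process_def by auto

lemma measurable_card_inter:
  assumes "stationary_poisson_process M X lam" "B \<in> sets borel" "bounded B"
  shows "(\<lambda>w. card (X w \<inter> B)) \<in> measurable M (count_space UNIV)"
  using poisson_distributed_card[OF assms] unfolding poisson_distributed_def by simp

lemma not_occupied_at_scale_eq: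
  assumes "stationary_poisson_process M X lam"
  shows "{w \<in> space M. \<not> occupied_at_scale (X w) k m}
    = (\<Union>j\<in>near_grid_points k m. {w \<in> space M. card (X w \<inter> grid_cube m j) = 0})"
proof -
  have "card (X w \<inter> grid_cube m j) = 0 \<longleftrightarrow> X w \<inter> grid_cube m j = {}" if "w \<in> space M" for w j
    using poisson_process_locally_finite[OF assms that] unfolding locally_finite_set_def grid_cube_def
    by simp
  then show ?thesis unfolding occupied_at_scale_def by blast
qed

lemma measurable_occupied_at_scale:
  fixes X :: "'w \<Rightarrow> 'a::euclidean_space set"
  assumes "stationary_poisson_process M X lam" "m > 0"
  shows "(\<lambda>w. occupied_at_scale (X w) k m) \<in> measurable M (count_space UNIV)"
proof -
  have [measurable]: "(\<lambda>w. card (X w \<inter> grid_cube m j)) \<in> measurable M (count_space UNIV)" for j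
    using assms(1) by (rule measurable_card_inter) (auto simp: grid_cube_def)
  have "finite (near_grid_points k m)" using card_near_grid_points_le[OF assms(2), of k] by simp
  then have "{w \<in> space M. \<not> occupied_at_scale (X w) k m} \<in> sets M"
    unfolding not_occupied_at_scale_eq[OF assms(1)] by (intro sets.finite_UN) auto
  then have "space M - {w \<in> space M. \<not> occupied_at_scale (X w) k m} \<in> sets M" by auto
  moreover have "space M - {w \<in> space M. \<not> occupied_at_scale (X w) k m}
      = {w \<in> space M. occupied_at_scale (X w) k m}" by auto
  ultimately have "{w \<in> space M. occupied_at_scale (X w) k m} \<in> sets M" by (simp only:)
  then show ?thesis by (rule pred_def[THEN iffD2])
qed

lemma emeasure_not_occupied_at_scale_le:
  fixes X :: "'w \<Rightarrow> 'a::euclidean_space set"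
  assumes spp: "stationary_poisson_process M X lam" and m: "m > 0"
  shows "emeasure M {w \<in> space M. \<not> occupied_at_scale (X w) k m}
    \<le> ennreal ((10 * real DIM('a)) ^ DIM('a) * exp (- (lam * m ^ DIM('a))))"
proof -
  let ?empty = "\<lambda>j. {w \<in> space M. card (X w \<inter> grid_cube m j) = 0}"
  have poisson: "poisson_distributed M (\<lambda>w. card (X w \<inter> grid_cube m j)) (lam * m ^ DIM('a))" for j
  proof -
    have "grid_cube m j \<in> sets borel" "bounded (grid_cube m j)" by (simp_all add: grid_cube_def)
    from poisson_distributed_card[OF spp this] show ?thesis using m by (simp add: measure_grid_cube)
  qed
  have [measurable]: "(\<lambda>w. card (X w \<inter> grid_cube m j)) \<in> measurable M (count_space UNIV)" for j
    using poisson[of j] unfolding poisson_distributed_def by simp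
  have empty_sets: "?empty j \<in> sets M" for j by measurable
  have "emeasure M {w \<in> space M. \<not> occupied_at_scale (X w) k m}
      \<le> (\<Sum>j\<in>near_grid_points k m. emeasure M (?empty j))"
    unfolding not_occupied_at_scale_eq[OF spp]
    using card_near_grid_points_le[OF m, of k] by (intro emeasure_subadditive_finite) (auto simp: empty_sets)
  also have "\<dots> = of_nat (card (near_grid_points k m)) * ennreal (exp (- (lam * m ^ DIM('a))))"
    by (simp add: emeasure_poisson_distributed_eq_0[OF poisson])
  also have "\<dots> \<le> ennreal ((10 * real DIM('a)) ^ DIM('a) * exp (- (lam * m ^ DIM('a))))"
    using card_near_grid_points_le[OF m, of k]
    by (simp add: ennreal_of_nat_eq_real_of_nat ennreal_mult'[symmetric] ennreal_leI)
  finally show ?thesis .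
qed

lemma emeasure_never_occupied:
  fixes X :: "'w \<Rightarrow> 'a::euclidean_space set"
  assumes spp: "stationary_poisson_process M X lam"
  shows "emeasure M {w \<in> space M. \<forall>n. \<not> occupied_at_scale (X w) k (real (Suc n))} = 0"
proof -
  interpret prob_space M by (rule poisson_process_prob_space[OF spp])
  have lam: "lam > 0" by (rule poisson_process_intensity_pos[OF spp])
  define K where "K = (10 * real DIM('a)) ^ DIM('a)"
  define never where "never = {w \<in> space M. \<forall>n. \<not> occupied_at_scale (X w) k (real (Suc n))}"
  have "measure M never \<le> K * exp (- lam * real n)" for n
  proof -
    have "{w \<in> space M. \<not> occupied_at_scale (X w) k (real (Suc n))} \<in> events"
      by (intro predE pred_intros_logic(2) measurable_occupied_at_scale[OF spp, of "real (Suc n)"]) simp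
    then have "measure M never \<le> measure M {w \<in> space M. \<not> occupied_at_scale (X w) k (real (Suc n))}"
      unfolding never_def by (rule finite_measure_mono[rotated]) auto
    also have "\<dots> \<le> K * exp (- (lam * real (Suc n) ^ DIM('a)))"
      using emeasure_not_occupied_at_scale_le[OF spp, of "real (Suc n)" k] unfolding K_def
      by (simp add: emeasure_eq_measure)
    also have "\<dots> \<le> K * exp (- lam * real n)"
    proof -
      have "real n \<le> real (Suc n) ^ DIM('a)"
        using self_le_power[of "real (Suc n)" "DIM('a)"] DIM_positive[where 'a='a] by simp
      then have "exp (- (lam * real (Suc n) ^ DIM('a))) \<le> exp (- lam * real n)"
        using lam by simp
      then show ?thesis unfolding K_def by (rule mult_left_mono) simp
    qed
    finally show ?thesis .
  qed
  moreover have "(\<lambda>n. K * exp (- lam * real n)) \<longlonglongrightarrow> 0"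
    using summable_poly_bounded_mult_exp[OF poly_bounded_const lam, of K] by (rule summable_LIMSEQ_zero)
  ultimately have "measure M never \<le> 0" by (intro LIMSEQ_le_const) auto
  then show ?thesis unfolding never_def[symmetric] by (simp add: emeasure_eq_measure measure_le_0_iff)
qed

section \<open>Charging boundary cells to lattice points\<close>

definition anchor :: "'a::euclidean_space set \<Rightarrow> 'a" where
  "anchor Q = lattice_floor (SOME q. q \<in> Q)"

definition newly_occupied :: "'a::euclidean_space set \<Rightarrow> 'a \<Rightarrow> nat \<Rightarrow> bool" where
  "newly_occupied A k n \<longleftrightarrow>
     occupied_at_scale A k (real (Suc n)) \<and> (n = 0 \<or> \<not> occupied_at_scale A k (real n))"

definition in_shell :: "real \<Rightarrow> nat \<Rightarrow> 'a::euclidean_space \<Rightarrow> bool" where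
  "in_shell R n k \<longleftrightarrow> \<bar>norm k - R\<bar> < 5 * real DIM('a) * real (Suc n)"

text \<open>A cell anchored at k whose scale is m = n + 1 has tiles of measure at most (8 DIM('a) m)^DIM('a)
  and its vertices among the points of A in the cube of radius 5 DIM('a) m around k; the number N
  of these points bounds the number of such p-cells by N^(p + 1).\<close>

definition scale_charge :: "'a::euclidean_space set \<Rightarrow> real \<Rightarrow> nat \<Rightarrow> 'a \<Rightarrow> nat \<Rightarrow> ennreal" where
  "scale_charge A R p k n =
     (if newly_occupied A k n \<and> in_shell R n k
      then ennreal ((8 * real DIM('a) * real (Suc n)) ^ DIM('a)
             * real (card (A \<inter> centered_cube k (5 * real DIM('a) * real (Suc n)))) ^ Suc p)
      else 0)"

definition lattice_charge :: "'a::euclidean_space set \<Rightarrow> real \<Rightarrow> nat \<Rightarrow> 'a \<Rightarrow> ennreal" where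
  "lattice_charge A R p k = (\<Sum>n. scale_charge A R p k n)
     + (if \<forall>n. \<not> occupied_at_scale A k (real (Suc n)) then \<top> else 0)"

lemma newly_occupied_Least:
  assumes "\<exists>n. occupied_at_scale A k (real (Suc n))"
  shows "newly_occupied A k (LEAST n. occupied_at_scale A k (real (Suc n)))"
proof -
  define n0 where "n0 = (LEAST n. occupied_at_scale A k (real (Suc n)))"
  have "occupied_at_scale A k (real (Suc n0))" unfolding n0_def using assms by (rule LeastI_ex)
  moreover have "n0 = 0 \<or> \<not> occupied_at_scale A k (real n0)"
    using not_less_Least[of "n0 - 1" "\<lambda>n. occupied_at_scale A k (real (Suc n))"]
    unfolding n0_def[symmetric] by (cases n0) auto
  ultimately show ?thesis unfolding newly_occupied_def n0_def by blast
qed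

lemma anchored_cell_bounds:
  fixes A :: "'a::euclidean_space set"
  assumes Q: "Q \<in> delaunay_pcells A p" and boundary: "boundary_tile (ball 0 R) (ptile A p Q)"
    and "anchor Q = k" and occupied: "occupied_at_scale A k (real (Suc n))"
  shows "tile_measure p (ptile A p Q) \<le> ennreal ((8 * real DIM('a) * real (Suc n)) ^ DIM('a))"
    and "in_shell R n k"
    and "Q \<subseteq> A \<inter> centered_cube k (5 * real DIM('a) * real (Suc n))"
proof -
  define D where "D = real DIM('a)"
  define m where "m = real (Suc n)"
  have "D \<ge> 1" "m \<ge> 1" unfolding D_def m_def by (simp_all add: DIM_ge_1)
  have Q_vertices: "Q \<in> delaunay_vertex_sets A" using Q unfolding delaunay_pcells_def by simp
  define q where "q = (SOME q. q \<in> Q)"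
  have "q \<in> Q" using Q_vertices unfolding q_def delaunay_vertex_sets_def by (auto intro: someI)
  have qk: "norm (q - k) \<le> D"
    using norm_diff_lattice_floor_le[of q] \<open>anchor Q = k\<close> unfolding anchor_def q_def D_def by simp
  have near: "dist x q < 4 * D * m" if "(x, L) \<in> ptile A p Q" for x L
    using ptile_near_vertex[OF \<open>q \<in> Q\<close> _ \<open>m \<ge> 1\<close> _ that] qk occupied unfolding D_def m_def by simp
  have "tile_measure p (ptile A p Q) \<le> ennreal ((2 * (4 * D * m)) ^ DIM('a))"
    using near \<open>D \<ge> 1\<close> \<open>m \<ge> 1\<close> by (intro tile_measure_le_cube) auto
  then show "tile_measure p (ptile A p Q) \<le> ennreal ((8 * real DIM('a) * real (Suc n)) ^ DIM('a))"
    unfolding D_def m_def by (simp add: mult.assoc)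
  have "R - 4 * D * m - D < norm k \<and> norm k < R + 4 * D * m + D"
    by (rule boundary_tile_ball_norm_bounds[OF boundary near qk])
  moreover have "D \<le> D * m" using \<open>D \<ge> 1\<close> \<open>m \<ge> 1\<close> by simp
  ultimately show "in_shell R n k" unfolding in_shell_def D_def[symmetric] m_def[symmetric] by linarith
  have "Q \<subseteq> A" using Q_vertices unfolding delaunay_vertex_sets_def nearest_def by auto
  with delaunay_vertices_subset_centered_cube[OF Q_vertices \<open>q \<in> Q\<close> _ \<open>m \<ge> 1\<close>] qk occupied
  show "Q \<subseteq> A \<inter> centered_cube k (5 * real DIM('a) * real (Suc n))"
    unfolding D_def m_def by auto
qed

lemma sum_anchored_tile_measure_le_scale_charge:
  fixes A :: "'a::euclidean_space set"
  assumes A: "locally_finite_set A"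
    and F: "F \<subseteq> {Q \<in> delaunay_pcells A p. boundary_tile (ball 0 R) (ptile A p Q)}"
    and newly: "newly_occupied A k n"
  shows "(\<Sum>Q\<in>{Q\<in>F. anchor Q = k}. tile_measure p (ptile A p Q)) \<le> scale_charge A R p k n"
proof -
  define B where "B = A \<inter> centered_cube k (5 * real DIM('a) * real (Suc n))"
  define c where "c = (8 * real DIM('a) * real (Suc n)) ^ DIM('a)"
  define Fk where "Fk = {Q \<in> F. anchor Q = k}"
  have bounds: "tile_measure p (ptile A p Q) \<le> ennreal c" "in_shell R n k" "Q \<subseteq> B" if "Q \<in> Fk" for Q
    using anchored_cell_bounds[of Q A p R k n] that F newly
    unfolding Fk_def B_def c_def newly_occupied_def by auto
  have "finite B" using A unfolding B_def locally_finite_set_def centered_cube_def by simp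
  moreover have "Fk \<subseteq> {Q \<in> delaunay_pcells A p. Q \<subseteq> B}"
    using F bounds(3) unfolding Fk_def by blast
  ultimately have card: "finite Fk \<and> card Fk \<le> card B ^ Suc p" by (rule card_delaunay_pcells_le)
  show ?thesis
  proof (cases "Fk = {}")
    case False
    have "(\<Sum>Q\<in>Fk. tile_measure p (ptile A p Q)) \<le> of_nat (card Fk) * ennreal c"
      using bounds by (intro sum_bounded_above) auto
    also have "\<dots> \<le> of_nat (card B ^ Suc p) * ennreal c"
      using card by (intro mult_right_mono of_nat_mono) auto
    also have "\<dots> = scale_charge A R p k n"
      using newly bounds False unfolding scale_charge_def c_def B_def
      by (auto simp: ennreal_mult' ennreal_of_nat_eq_real_of_nat mult.commute)
    finally show ?thesis unfolding Fk_def .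
  qed (simp only: Fk_def[symmetric], simp)
qed

lemma sum_anchored_tile_measure_le_lattice_charge:
  fixes A :: "'a::euclidean_space set"
  assumes "locally_finite_set A"
    and "F \<subseteq> {Q \<in> delaunay_pcells A p. boundary_tile (ball 0 R) (ptile A p Q)}"
  shows "(\<Sum>Q\<in>{Q\<in>F. anchor Q = k}. tile_measure p (ptile A p Q)) \<le> lattice_charge A R p k"
proof (cases "\<exists>n. occupied_at_scale A k (real (Suc n))")
  case True
  define n0 where "n0 = (LEAST n. occupied_at_scale A k (real (Suc n)))"
  have "newly_occupied A k n0" unfolding n0_def using True by (rule newly_occupied_Least)
  then have "(\<Sum>Q\<in>{Q\<in>F. anchor Q = k}. tile_measure p (ptile A p Q)) \<le> scale_charge A R p k n0"
    using assms by (intro sum_anchored_tile_measure_le_scale_charge)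
  also have "\<dots> \<le> (\<Sum>n. scale_charge A R p k n)"
    using sum_le_suminf[of "scale_charge A R p k" "{n0}"] by simp
  also have "\<dots> \<le> lattice_charge A R p k"
    unfolding lattice_charge_def by simp
  finally show ?thesis .
qed (simp add: lattice_charge_def)

lemma boundary_ptile_measure_le_lattice_charge:
  fixes A :: "'a::euclidean_space set"
  assumes "locally_finite_set A"
  shows "boundary_ptile_measure A p (ball 0 R) \<le> (\<integral>\<^sup>+ k. lattice_charge A R p k \<partial>count_space int_lattice)"
  unfolding boundary_ptile_measure_def
proof (rule infsum_le_finite_sums)
  fix F assume "finite F"
    and F: "F \<subseteq> {Q \<in> delaunay_pcells A p. boundary_tile (ball 0 R) (ptile A p Q)}"
  define K where "K = anchor ` F"
  have "finite K" "K \<subseteq> int_lattice"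
    unfolding K_def anchor_def using \<open>finite F\<close> lattice_floor_in_int_lattice by auto
  have "(\<Sum>Q\<in>F. tile_measure p (ptile A p Q))
      = (\<Sum>k\<in>K. \<Sum>Q\<in>{Q\<in>F. anchor Q = k}. tile_measure p (ptile A p Q))"
    unfolding K_def using \<open>finite F\<close> by (rule sum.image_gen)
  also have "\<dots> \<le> (\<Sum>k\<in>K. lattice_charge A R p k)"
    by (intro sum_mono sum_anchored_tile_measure_le_lattice_charge[OF assms F])
  also have "\<dots> = (\<integral>\<^sup>+ k. lattice_charge A R p k * indicator K k \<partial>count_space int_lattice)"
    using \<open>finite K\<close> \<open>K \<subseteq> int_lattice\<close> by (subst nn_integral_count_space') auto
  also have "\<dots> \<le> (\<integral>\<^sup>+ k. lattice_charge A R p k \<partial>count_space int_lattice)"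
    by (intro nn_integral_mono) (auto split: split_indicator)
  finally show "(\<Sum>Q\<in>F. tile_measure p (ptile A p Q))
      \<le> (\<integral>\<^sup>+ k. lattice_charge A R p k \<partial>count_space int_lattice)" .
qed (rule nonneg_summable_on_complete, simp)

section \<open>The expected charge of a lattice point\<close>

lemma nn_integral_indicator_mult_le:
  assumes [measurable]: "E \<in> sets M" "f \<in> borel_measurable M"
    and f: "\<And>w. f w \<ge> 0" and e: "e > 0"
  shows "(\<integral>\<^sup>+ w. indicator E w * ennreal (f w) \<partial>M)
    \<le> ennreal e * (\<integral>\<^sup>+ w. ennreal ((f w)\<^sup>2) \<partial>M) + ennreal (1 / e) * emeasure M E"
proof -
  have "indicator E w * ennreal (f w) \<le> ennreal e * ennreal ((f w)\<^sup>2) + ennreal (1 / e) * indicator E w"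
    for w
  proof (cases "w \<in> E")
    case True
    have "0 \<le> (e * f w - 1)\<^sup>2" by simp
    then have "2 * (e * f w) \<le> (e * f w)\<^sup>2 + 1" by (simp add: power2_eq_square algebra_simps)
    moreover have "0 \<le> e * f w" using e f[of w] by simp
    ultimately have "e * f w \<le> (e * f w)\<^sup>2 + 1" by linarith
    then have "f w \<le> e * (f w)\<^sup>2 + 1 / e" using e by (simp add: field_simps power2_eq_square)
    then have "ennreal (f w) \<le> ennreal (e * (f w)\<^sup>2 + 1 / e)" by (rule ennreal_leI)
    also have "\<dots> = ennreal e * ennreal ((f w)\<^sup>2) + ennreal (1 / e)"
      using e by (simp add: ennreal_plus ennreal_mult)
    finally show ?thesis using True by simp
  qed simp
  then have "(\<integral>\<^sup>+ w. indicator E w * ennreal (f w) \<partial>M)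
      \<le> (\<integral>\<^sup>+ w. ennreal e * ennreal ((f w)\<^sup>2) + ennreal (1 / e) * indicator E w \<partial>M)"
    by (rule nn_integral_mono)
  also have "\<dots> = ennreal e * (\<integral>\<^sup>+ w. ennreal ((f w)\<^sup>2) \<partial>M) + ennreal (1 / e) * emeasure M E"
    by (simp add: nn_integral_add nn_integral_cmult nn_integral_cmult_indicator)
  finally show ?thesis .
qed

lemma measurable_newly_occupied:
  fixes X :: "'w \<Rightarrow> 'a::euclidean_space set"
  assumes spp: "stationary_poisson_process M X lam"
  shows "(\<lambda>w. newly_occupied (X w) k n) \<in> measurable M (count_space UNIV)"
proof -
  have [measurable]: "(\<lambda>w. occupied_at_scale (X w) k (real (Suc i))) \<in> measurable M (count_space UNIV)"
    for i by (rule measurable_occupied_at_scale[OF spp]) simp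
  show ?thesis
  proof (cases n)
    case (Suc i)
    show ?thesis unfolding newly_occupied_def Suc by measurable
  qed (simp add: newly_occupied_def del: of_nat_Suc)
qed

lemma emeasure_newly_occupied_le:
  fixes X :: "'w \<Rightarrow> 'a::euclidean_space set"
  assumes spp: "stationary_poisson_process M X lam"
  shows "emeasure M {w \<in> space M. newly_occupied (X w) k n}
    \<le> ennreal (((10 * real DIM('a)) ^ DIM('a) + 1) * exp (- (lam * real n ^ DIM('a))))"
proof (cases n)
  case 0
  interpret prob_space M by (rule poisson_process_prob_space[OF spp])
  have "emeasure M {w \<in> space M. newly_occupied (X w) k n} \<le> 1" by (rule emeasure_le_1)
  also have "\<dots> \<le> ennreal (((10 * real DIM('a)) ^ DIM('a) + 1) * exp (- (lam * real n ^ DIM('a))))"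
    using 0 DIM_positive[where 'a='a] by (simp add: power_0_left)
  finally show ?thesis .
next
  case (Suc i)
  have "{w \<in> space M. \<not> occupied_at_scale (X w) k (real n)} \<in> sets M"
    by (intro predE pred_intros_logic(2) measurable_occupied_at_scale[OF spp]) (simp add: Suc)
  then have "emeasure M {w \<in> space M. newly_occupied (X w) k n}
      \<le> emeasure M {w \<in> space M. \<not> occupied_at_scale (X w) k (real n)}"
    by (rule emeasure_mono[rotated]) (auto simp: newly_occupied_def Suc)
  also have "\<dots> \<le> ennreal ((10 * real DIM('a)) ^ DIM('a) * exp (- (lam * real n ^ DIM('a))))"
    using Suc by (intro emeasure_not_occupied_at_scale_le[OF spp]) simp
  also have "\<dots> \<le> ennreal (((10 * real DIM('a)) ^ DIM('a) + 1) * exp (- (lam * real n ^ DIM('a))))"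
    by (intro ennreal_leI mult_right_mono) auto
  finally show ?thesis .
qed

lemma poisson_distributed_card_centered_cube:
  fixes X :: "'w \<Rightarrow> 'a::euclidean_space set"
  assumes "stationary_poisson_process M X lam" "c \<ge> 0"
  shows "poisson_distributed M (\<lambda>w. card (X w \<inter> centered_cube k c)) (lam * (2 * c) ^ DIM('a))"
proof -
  have "centered_cube k c \<in> sets borel" "bounded (centered_cube k c)"
    by (simp_all add: centered_cube_def)
  from poisson_distributed_card[OF assms(1) this] show ?thesis
    using assms(2) by (simp add: measure_centered_cube)
qed

text \<open>The factor exp (- lam n^d / 2) is the square root of the bound on the probability that
  n + 1 is a newly occupied scale; the other square root pays for the moment of the count.\<close>

definition scale_weight :: "nat \<Rightarrow> real \<Rightarrow> nat \<Rightarrow> nat \<Rightarrow> real" where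
  "scale_weight d lam p n = (8 * real d * real (Suc n)) ^ d * exp (- (lam * real n ^ d) / 2)
     * (fact (2 * Suc p) * (lam * (10 * real d * real (Suc n)) ^ d + 1) ^ (2 * Suc p) * exp 3
        + ((10 * real d) ^ d + 1))"

lemma nn_integral_indicator_mult_poisson_power_le:
  assumes poisson: "poisson_distributed M N \<mu>" and E: "E \<in> sets M"
    and "emeasure M E \<le> ennreal (K * \<epsilon>\<^sup>2)" "\<epsilon> > 0" "c \<ge> 0" "K \<ge> 0"
  shows "(\<integral>\<^sup>+ w. indicator E w * ennreal (c * real (N w) ^ Suc p) \<partial>M)
    \<le> ennreal (c * \<epsilon> * (fact (2 * Suc p) * (\<mu> + 1) ^ (2 * Suc p) * exp 3 + K))"
proof -
  define F where "F = fact (2 * Suc p) * (\<mu> + 1) ^ (2 * Suc p) * exp 3"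
  have "\<mu> \<ge> 0" "F \<ge> 0" and [measurable]: "N \<in> measurable M (count_space UNIV)"
    using poisson unfolding poisson_distributed_def F_def by auto
  have f: "(\<lambda>w. real (N w) ^ Suc p) \<in> borel_measurable M" by measurable
  have sq: "(real (N w) ^ Suc p)\<^sup>2 = real (N w) ^ (2 * Suc p)" for w
    by (metis power_mult mult.commute)
  have "(\<integral>\<^sup>+ w. indicator E w * ennreal (c * real (N w) ^ Suc p) \<partial>M)
      = ennreal c * (\<integral>\<^sup>+ w. indicator E w * ennreal (real (N w) ^ Suc p) \<partial>M)"
    using assms E by (subst nn_integral_cmult[symmetric]) (auto simp: ennreal_mult' mult_ac)
  also have "\<dots> \<le> ennreal c * (ennreal \<epsilon> * (\<integral>\<^sup>+ w. ennreal (real (N w) ^ (2 * Suc p)) \<partial>M)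
      + ennreal (1 / \<epsilon>) * emeasure M E)"
    using nn_integral_indicator_mult_le[OF E f _ \<open>\<epsilon> > 0\<close>] unfolding sq by (simp add: mult_left_mono)
  also have "\<dots> \<le> ennreal c * (ennreal \<epsilon> * ennreal F + ennreal (1 / \<epsilon>) * ennreal (K * \<epsilon>\<^sup>2))"
  proof (intro mult_left_mono add_mono)
    show "(\<integral>\<^sup>+ w. ennreal (real (N w) ^ (2 * Suc p)) \<partial>M) \<le> ennreal F"
      unfolding F_def by (rule nn_integral_power_poisson_distributed_le[OF poisson])
  qed (use assms in auto)
  also have "ennreal (1 / \<epsilon>) * ennreal (K * \<epsilon>\<^sup>2) = ennreal (K * \<epsilon>)"
    using assms by (subst ennreal_mult[symmetric]) (simp_all add: power2_eq_square)
  also have "ennreal c * (ennreal \<epsilon> * ennreal F + ennreal (K * \<epsilon>)) = ennreal (c * \<epsilon> * (F + K))"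
    using assms \<open>F \<ge> 0\<close> by (simp add: ennreal_mult algebra_simps)
  finally show ?thesis unfolding F_def .
qed

lemma nn_integral_scale_charge_le:
  fixes X :: "'w \<Rightarrow> 'a::euclidean_space set"
  assumes spp: "stationary_poisson_process M X lam" and shell: "in_shell R n k"
  shows "(\<integral>\<^sup>+ w. scale_charge (X w) R p k n \<partial>M) \<le> ennreal (scale_weight DIM('a) lam p n)"
proof -
  define D where "D = real DIM('a)"
  define E where "E = {w \<in> space M. newly_occupied (X w) k n}"
  define N where "N w = card (X w \<inter> centered_cube k (5 * D * real (Suc n)))" for w
  define \<epsilon> where "\<epsilon> = exp (- (lam * real n ^ DIM('a)) / 2)"
  have poisson: "poisson_distributed M N (lam * (10 * D * real (Suc n)) ^ DIM('a))"
    using poisson_distributed_card_centered_cube[OF spp, of "5 * D * real (Suc n)" k]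
    unfolding N_def D_def by (simp add: mult.assoc)
  have "E \<in> sets M" unfolding E_def using measurable_newly_occupied[OF spp] by measurable
  have "\<epsilon>\<^sup>2 = exp (- (lam * real n ^ DIM('a)))"
    unfolding \<epsilon>_def power2_eq_square by (simp add: mult_exp_exp)
  then have "emeasure M E \<le> ennreal (((10 * D) ^ DIM('a) + 1) * \<epsilon>\<^sup>2)"
    using emeasure_newly_occupied_le[OF spp, of k n] unfolding E_def D_def by simp
  from nn_integral_indicator_mult_poisson_power_le[OF poisson \<open>E \<in> sets M\<close> this, of
      "(8 * D * real (Suc n)) ^ DIM('a)" p]
  have "(\<integral>\<^sup>+ w. indicator E w * ennreal ((8 * D * real (Suc n)) ^ DIM('a) * real (N w) ^ Suc p) \<partial>M)
      \<le> ennreal ((8 * D * real (Suc n)) ^ DIM('a) * \<epsilon> * (fact (2 * Suc p)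
          * (lam * (10 * D * real (Suc n)) ^ DIM('a) + 1) ^ (2 * Suc p) * exp 3 + ((10 * D) ^ DIM('a) + 1)))"
    by (simp add: \<epsilon>_def D_def)
  also have "\<dots> = ennreal (scale_weight DIM('a) lam p n)"
    unfolding scale_weight_def \<epsilon>_def D_def ..
  finally have "(\<integral>\<^sup>+ w. indicator E w * ennreal ((8 * D * real (Suc n)) ^ DIM('a) * real (N w) ^ Suc p) \<partial>M)
      \<le> ennreal (scale_weight DIM('a) lam p n)" .
  moreover have "(\<integral>\<^sup>+ w. scale_charge (X w) R p k n \<partial>M)
      = (\<integral>\<^sup>+ w. indicator E w * ennreal ((8 * D * real (Suc n)) ^ DIM('a) * real (N w) ^ Suc p) \<partial>M)"
    using shell by (intro nn_integral_cong) (simp add: scale_charge_def E_def N_def D_def)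
  ultimately show ?thesis by simp
qed

lemma measurable_scale_charge:
  fixes X :: "'w \<Rightarrow> 'a::euclidean_space set"
  assumes spp: "stationary_poisson_process M X lam"
  shows "(\<lambda>w. scale_charge (X w) R p k n) \<in> borel_measurable M"
proof -
  have [measurable]: "(\<lambda>w. newly_occupied (X w) k n) \<in> measurable M (count_space UNIV)"
    by (rule measurable_newly_occupied[OF spp])
  have [measurable]: "(\<lambda>w. card (X w \<inter> centered_cube k c)) \<in> measurable M (count_space UNIV)" for c
    using spp by (rule measurable_card_inter) (simp_all add: centered_cube_def)
  show ?thesis unfolding scale_charge_def by measurable
qed

lemma measurable_lattice_charge:
  fixes X :: "'w \<Rightarrow> 'a::euclidean_space set"
  assumes spp: "stationary_poisson_process M X lam"
  shows "(\<lambda>w. lattice_charge (X w) R p k) \<in> borel_measurable M"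
proof -
  have [measurable]: "(\<lambda>w. occupied_at_scale (X w) k (real (Suc n))) \<in> measurable M (count_space UNIV)"
    for n by (rule measurable_occupied_at_scale[OF spp]) simp
  have [measurable]: "(\<lambda>w. scale_charge (X w) R p k n) \<in> borel_measurable M" for n
    by (rule measurable_scale_charge[OF spp])
  show ?thesis unfolding lattice_charge_def by measurable
qed

lemma nn_integral_lattice_charge_le:
  fixes X :: "'w \<Rightarrow> 'a::euclidean_space set"
  assumes spp: "stationary_poisson_process M X lam"
  shows "(\<integral>\<^sup>+ w. lattice_charge (X w) R p k \<partial>M)
    \<le> (\<Sum>n. if in_shell R n k then ennreal (scale_weight DIM('a) lam p n) else 0)"
proof -
  define never where "never = {w \<in> space M. \<forall>n. \<not> occupied_at_scale (X w) k (real (Suc n))}"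
  have [measurable]: "(\<lambda>w. occupied_at_scale (X w) k (real (Suc n))) \<in> measurable M (count_space UNIV)"
    for n by (rule measurable_occupied_at_scale[OF spp]) simp
  have "never \<in> null_sets M"
  proof (rule null_setsI)
    show "emeasure M never = 0" unfolding never_def by (rule emeasure_never_occupied[OF spp])
    show "never \<in> sets M" unfolding never_def by measurable
  qed
  then have "AE w in M. lattice_charge (X w) R p k = (\<Sum>n. scale_charge (X w) R p k n)"
    by (rule AE_I') (auto simp: lattice_charge_def never_def)
  then have "(\<integral>\<^sup>+ w. lattice_charge (X w) R p k \<partial>M) = (\<integral>\<^sup>+ w. (\<Sum>n. scale_charge (X w) R p k n) \<partial>M)"
    by (rule nn_integral_cong_AE)
  also have "\<dots> = (\<Sum>n. \<integral>\<^sup>+ w. scale_charge (X w) R p k n \<partial>M)"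
    by (intro nn_integral_suminf measurable_scale_charge[OF spp])
  also have "\<dots> \<le> (\<Sum>n. if in_shell R n k then ennreal (scale_weight DIM('a) lam p n) else 0)"
    using nn_integral_scale_charge_le[OF spp] by (intro suminf_le) (auto simp: scale_charge_def)
  finally show ?thesis .
qed

section \<open>Summing over the lattice\<close>

definition shell_factor :: "nat \<Rightarrow> nat \<Rightarrow> real" where
  "shell_factor d n = unit_ball_vol d * real d * (2 * (5 * real d * real (Suc n) + real d))
     * (1 + (5 * real d * real (Suc n) + real d)) ^ (d - 1)"

lemma nn_integral_in_shell_le:
  assumes "R \<ge> 0" "c \<ge> 0"
  shows "(\<integral>\<^sup>+ k. (if in_shell R n k then ennreal c else 0) \<partial>count_space (int_lattice :: 'a::euclidean_space set))
    \<le> ennreal ((R + 1) ^ (DIM('a) - 1) * (c * shell_factor DIM('a) n))"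
proof -
  define S where "S = {k \<in> (int_lattice :: 'a set). in_shell R n k}"
  have "S = {k \<in> int_lattice. R - 5 * real DIM('a) * real (Suc n) < norm k
      \<and> norm k < R + 5 * real DIM('a) * real (Suc n)}"
    unfolding S_def in_shell_def by auto
  then have "finite S" and card: "real (card S) \<le> (R + 1) ^ (DIM('a) - 1) * shell_factor DIM('a) n"
    using card_int_lattice_shell_le[OF assms(1), of "5 * real DIM('a) * real (Suc n)", where 'a='a]
    unfolding shell_factor_def by auto
  have "(\<integral>\<^sup>+ k. (if in_shell R n k then ennreal c else 0) \<partial>count_space (int_lattice :: 'a set))
      = (\<Sum>k\<in>S. ennreal c)"
    using \<open>finite S\<close> by (subst nn_integral_count_space') (auto simp: S_def intro!: sum.mono_neutral_cong_right)
  also have "\<dots> = ennreal (real (card S) * c)"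
    using assms(2) by (simp add: ennreal_of_nat_eq_real_of_nat ennreal_mult)
  also have "\<dots> \<le> ennreal ((R + 1) ^ (DIM('a) - 1) * shell_factor DIM('a) n * c)"
    using card assms(2) by (intro ennreal_leI mult_right_mono)
  also have "\<dots> = ennreal ((R + 1) ^ (DIM('a) - 1) * (c * shell_factor DIM('a) n))"
    by (simp add: mult_ac)
  finally show ?thesis .
qed

lemma summable_scale_weight_mult_shell_factor:
  assumes "lam > 0" "d > 0"
  shows "summable (\<lambda>n. scale_weight d lam p n * shell_factor d n)"
proof -
  define P where "P n = (8 * real d * real (Suc n)) ^ d
     * (fact (2 * Suc p) * (lam * (10 * real d * real (Suc n)) ^ d + 1) ^ (2 * Suc p) * exp 3
        + ((10 * real d) ^ d + 1)) * shell_factor d n" for n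
  have "poly_bounded P"
    unfolding P_def shell_factor_def
    by (intro poly_bounded_mult poly_bounded_add poly_bounded_power poly_bounded_const poly_bounded_Suc)
  then have "summable (\<lambda>n. P n * exp (- (lam * real n ^ d) / 2))"
    using assms by (rule summable_poly_bounded_mult_exp_power)
  then show ?thesis by (simp add: P_def scale_weight_def mult_ac)
qed

lemma nn_integral_boundary_ptile_measure_le:
  fixes X :: "'w \<Rightarrow> 'a::euclidean_space set"
  assumes spp: "stationary_poisson_process M X lam" and R: "R \<ge> 0"
  shows "(\<integral>\<^sup>+ w. boundary_ptile_measure (X w) p (ball 0 R) \<partial>M)
    \<le> ennreal ((R + 1) ^ (DIM('a) - 1) * (\<Sum>n. scale_weight DIM('a) lam p n * shell_factor DIM('a) n))"
proof -
  let ?w = "\<lambda>n. scale_weight DIM('a) lam p n"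
  let ?u = "\<lambda>n. (R + 1) ^ (DIM('a) - 1) * (?w n * shell_factor DIM('a) n)"
  have lam: "lam > 0" by (rule poisson_process_intensity_pos[OF spp])
  have w: "?w n \<ge> 0" for n using lam by (simp add: scale_weight_def)
  have u: "?u n \<ge> 0" for n using w[of n] R by (simp add: shell_factor_def)
  have summable: "summable (\<lambda>n. ?w n * shell_factor DIM('a) n)"
    using lam by (intro summable_scale_weight_mult_shell_factor) simp_all
  have "(\<integral>\<^sup>+ w. boundary_ptile_measure (X w) p (ball 0 R) \<partial>M)
      \<le> (\<integral>\<^sup>+ w. \<integral>\<^sup>+ k. lattice_charge (X w) R p k \<partial>count_space int_lattice \<partial>M)"
    by (intro nn_integral_mono boundary_ptile_measure_le_lattice_charge
        poisson_process_locally_finite[OF spp])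
  also have "\<dots> = (\<integral>\<^sup>+ k. \<integral>\<^sup>+ w. lattice_charge (X w) R p k \<partial>M \<partial>count_space int_lattice)"
    by (rule nn_integral_count_space_nn_integral[OF countable_int_lattice measurable_lattice_charge[OF spp]])
  also have "\<dots> \<le> (\<integral>\<^sup>+ k. (\<Sum>n. if in_shell R n k then ennreal (?w n) else 0)
      \<partial>count_space (int_lattice :: 'a set))"
    by (rule nn_integral_mono) (rule nn_integral_lattice_charge_le[OF spp])
  also have "\<dots> = (\<Sum>n. \<integral>\<^sup>+ k. (if in_shell R n k then ennreal (?w n) else 0)
      \<partial>count_space (int_lattice :: 'a set))"
    by (rule nn_integral_suminf) simp
  also have "\<dots> \<le> (\<Sum>n. ennreal (?u n))"
    using R w by (intro suminf_le nn_integral_in_shell_le) auto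
  also have "\<dots> = ennreal (\<Sum>n. ?u n)"
    using u summable by (intro suminf_ennreal2 summable_mult) auto
  also have "(\<Sum>n. ?u n) = (R + 1) ^ (DIM('a) - 1) * (\<Sum>n. ?w n * shell_factor DIM('a) n)"
    using summable by (rule suminf_mult)
  finally show ?thesis .
qed

lemma eventually_finite_and_smallo_power:
  fixes f :: "real \<Rightarrow> ennreal"
  assumes "d > 0" "S \<ge> 0" and f: "\<And>R. R \<ge> 0 \<Longrightarrow> f R \<le> ennreal ((R + 1) ^ (d - 1) * S)"
  shows "(\<forall>\<^sub>F R in at_top. f R < \<infinity>) \<and> (\<lambda>R. enn2real (f R)) \<in> o(\<lambda>R. R ^ d)"
proof
  show "\<forall>\<^sub>F R in at_top. f R < \<infinity>"
    using eventually_ge_at_top[of "0::real"]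
  proof eventually_elim
    case (elim R)
    show "f R < \<infinity>" using le_less_trans[OF f[OF elim] ennreal_less_top] by simp
  qed
  show "(\<lambda>R. enn2real (f R)) \<in> o(\<lambda>R. R ^ d)"
  proof (rule landau_o.smallI)
    fix c :: real assume "c > 0"
    show "\<forall>\<^sub>F R in at_top. norm (enn2real (f R)) \<le> c * norm (R ^ d)"
      using eventually_ge_at_top[of "max 1 (2 ^ (d - 1) * S / c)"]
    proof eventually_elim
      case (elim R)
      then have "R \<ge> 1" "2 ^ (d - 1) * S / c \<le> R" by simp_all
      then have "2 ^ (d - 1) * S \<le> c * R" using \<open>c > 0\<close> by (simp add: divide_le_eq mult.commute)
      have "enn2real (f R) \<le> (R + 1) ^ (d - 1) * S"
        using f[of R] \<open>R \<ge> 1\<close> \<open>S \<ge> 0\<close> by (intro enn2real_leI) auto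
      also have "\<dots> \<le> (2 * R) ^ (d - 1) * S"
        using \<open>R \<ge> 1\<close> \<open>S \<ge> 0\<close> by (intro mult_right_mono power_mono) auto
      also have "\<dots> = R ^ (d - 1) * (2 ^ (d - 1) * S)" by (simp add: power_mult_distrib)
      also have "\<dots> \<le> R ^ (d - 1) * (c * R)"
        using \<open>2 ^ (d - 1) * S \<le> c * R\<close> \<open>R \<ge> 1\<close> by (intro mult_left_mono) auto
      also have "\<dots> = c * R ^ Suc (d - 1)" by (simp add: mult_ac)
      also have "\<dots> = c * R ^ d" using \<open>d > 0\<close> by simp
      finally show ?case using \<open>R \<ge> 1\<close> by simp
    qed
  qed
qed

theorem lemma4p3:
  fixes M :: "'w measure" and X :: "'w \<Rightarrow> 'a::euclidean_space set" and lam :: real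
    and p :: nat
  assumes "stationary_poisson_process M X lam"
    and "p \<le> DIM('a)"
  shows "(\<forall>\<^sub>F R in at_top. (\<integral>\<^sup>+ w. boundary_ptile_measure (X w) p (ball 0 R) \<partial>M) < \<infinity>)
       \<and> (\<lambda>R. enn2real (\<integral>\<^sup>+ w. boundary_ptile_measure (X w) p (ball 0 R) \<partial>M))
           \<in> o(\<lambda>R. R ^ DIM('a))"
proof (rule eventually_finite_and_smallo_power)
  have "lam > 0" by (rule poisson_process_intensity_pos[OF assms(1)])
  then show "(\<Sum>n. scale_weight DIM('a) lam p n * shell_factor DIM('a) n) \<ge> 0"
    by (intro suminf_nonneg summable_scale_weight_mult_shell_factor)
      (simp_all add: scale_weight_def shell_factor_def)
qed (use nn_integral_boundary_ptile_measure_le[OF assms(1)] in auto)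

end
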